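(* Let $A<\mathbb{R}$ be any subring. Then the group $H(A)$ is inner amenable, i.e. there is a mean on $H(A)\setminus\{e\}$ invariant under conjugation by $H(A)$.
   Context: Let $\mathbb{P}^1=\mathbb{P}^1(\mathbb{R})$ with its usual topology (a circle) and the natural action of $\mathrm{PSL}_2(\mathbb{R})$. Let $G$ be the group of homeomorphisms of $\mathbb{P}^1$ which are piecewise in $\mathrm{PSL}_2(\mathbb{R})$ with finitely many pieces, each an interval. Let $\infty\in\mathbb{P}^1$ correspond to the first basis vector of $\mathbb{R}^2$ and $H<G$ its stabilizer. For a subring $A<\mathbb{R}$, $P_A$ is the set of fixed points of hyperbolic elements of $\mathrm{PSL}_2(A)$, $G(A)$ is the subgroup of $G$ of elements piecewise in $\mathrm{PSL}_2(A)$ with all interval endpoints in $P_A$, and $H(A)=G(A)\cap H$. *)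

theory Defs
  imports "HOL-Analysis.Analysis"
begin

text \<open>The projective line P^1(R): a point [x:y] with y \<noteq> 0 is encoded as Some (x/y),
  and the point [1:0] (the line spanned by the first basis vector) is None, i.e. \<infinity>.\<close>
type_synonym P1 = "real option"

abbreviation P1_inf :: P1 where "P1_inf \<equiv> None"

text \<open>Identification of P^1 with the unit circle (a bijection), used to give P^1 its topology.\<close>
definition P1_to_circle :: "P1 \<Rightarrow> complex" where
  "P1_to_circle p = (case p of None \<Rightarrow> 1
     | Some t \<Rightarrow> Complex ((t^2 - 1) / (t^2 + 1)) (2 * t / (t^2 + 1)))"

definition P1_top :: "P1 topology" where
  "P1_top = pullback_topology UNIV P1_to_circle (top_of_set (sphere (0::complex) 1))"

text \<open>2x2 real matrices (a,b,c,d) = [[a,b],[c,d]].\<close>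
type_synonym mat2 = "real \<times> real \<times> real \<times> real"

definition SL2 :: "real set \<Rightarrow> mat2 set" where
  "SL2 A = {(a,b,c,d). a \<in> A \<and> b \<in> A \<and> c \<in> A \<and> d \<in> A \<and> a * d - b * c = 1}"

text \<open>Projective (Moebius) action of a matrix on P^1: [x:y] \<mapsto> [ax+by : cx+dy].
  It only depends on the class of the matrix in PSL2.\<close>
definition mob :: "mat2 \<Rightarrow> P1 \<Rightarrow> P1" where
  "mob M p = (case M of (a,b,c,d) \<Rightarrow>
     (case p of
        None \<Rightarrow> (if c = 0 then None else Some (a / c))
      | Some t \<Rightarrow> (if c * t + d = 0 then None else Some ((a * t + b) / (c * t + d)))))"

definition subring_of_reals :: "real set \<Rightarrow> bool" where
  "subring_of_reals A \<longleftrightarrow> 0 \<in> A \<and> 1 \<in> A \<and>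
     (\<forall>x\<in>A. \<forall>y\<in>A. x + y \<in> A \<and> x - y \<in> A \<and> x * y \<in> A)"

definition hyperbolic :: "mat2 \<Rightarrow> bool" where
  "hyperbolic M = (case M of (a,b,c,d) \<Rightarrow> \<bar>a + d\<bar> > 2)"

definition P_A :: "real set \<Rightarrow> P1 set" where
  "P_A A = {p. \<exists>M\<in>SL2 A. hyperbolic M \<and> mob M p = p}"

text \<open>Closed interval of the circle P^1 from x to y, travelling in the positive direction
  (increasing on R, passing through \<infinity> from +\<infinity> to -\<infinity>).\<close>
definition cint :: "P1 \<Rightarrow> P1 \<Rightarrow> P1 set" where
  "cint x y = (case (x, y) of
      (Some a, Some b) \<Rightarrow> (if a \<le> b then Some ` {a..b}
                            else Some ` {a..} \<union> {None} \<union> Some ` {..b})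
    | (Some a, None) \<Rightarrow> Some ` {a..} \<union> {None}
    | (None, Some b) \<Rightarrow> {None} \<union> Some ` {..b}
    | (None, None) \<Rightarrow> {None})"

text \<open>G(A): homeomorphisms of P^1 which are piecewise in PSL2(A), with finitely many
  interval pieces whose endpoints lie in P_A.  (Pieces are taken closed, covering P^1;
  for homeomorphisms this is equivalent to a partition into intervals.)\<close>
definition G_A :: "real set \<Rightarrow> (P1 \<Rightarrow> P1) set" where
  "G_A A = {g. homeomorphic_map P1_top P1_top g \<and>
     (\<exists>ps :: (P1 \<times> P1 \<times> mat2) list.
        (\<Union>(x,y,M)\<in>set ps. cint x y) = UNIV \<and>
        (\<forall>(x,y,M)\<in>set ps. x \<in> P_A A \<and> y \<in> P_A A \<and> M \<in> SL2 A \<and>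
                            (\<forall>p\<in>cint x y. g p = mob M p)))}"

definition H_A :: "real set \<Rightarrow> (P1 \<Rightarrow> P1) set" where
  "H_A A = {g \<in> G_A A. g P1_inf = P1_inf}"

definition bdd_on :: "'a set \<Rightarrow> ('a \<Rightarrow> real) \<Rightarrow> bool" where
  "bdd_on X f \<longleftrightarrow> (\<exists>B. \<forall>x\<in>X. \<bar>f x\<bar> \<le> B)"

definition is_mean :: "'a set \<Rightarrow> (('a \<Rightarrow> real) \<Rightarrow> real) \<Rightarrow> bool" where
  "is_mean X m \<longleftrightarrow>
     (\<forall>f g. bdd_on X f \<longrightarrow> bdd_on X g \<longrightarrow> m (\<lambda>x. f x + g x) = m f + m g) \<and>
     (\<forall>f c. bdd_on X f \<longrightarrow> m (\<lambda>x. c * f x) = c * m f) \<and>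
     (\<forall>f. bdd_on X f \<longrightarrow> (\<forall>x\<in>X. f x \<ge> 0) \<longrightarrow> m f \<ge> 0) \<and>
     m (\<lambda>x. 1) = 1"

definition inner_amenable :: "('b \<Rightarrow> 'b) set \<Rightarrow> bool" where
  "inner_amenable Gr \<longleftrightarrow> (\<exists>m. is_mean (Gr - {id}) m \<and>
     (\<forall>h\<in>Gr. \<forall>f. bdd_on (Gr - {id}) f \<longrightarrow>
        m (\<lambda>x. f (inv h \<circ> x \<circ> h)) = m f))"

end

theory Submission
  imports Defs
begin

text \<open>
  The maps \<open>bump a b\<close> below are hyperbolic projective transformations with coefficients in \<open>A\<close>,
  restricted to the interval between their two fixed points and extended by the identity; they
  lie in \<open>H(A) - {id}\<close>, and their support moves to \<open>\<infinity>\<close> as \<open>b \<rightarrow> -\<infinity>\<close>. An element \<open>h\<close> of \<open>H(A)\<close>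
  fixes \<open>\<infinity>\<close>, so on some ray \<open>[R, \<infinity>)\<close> it is an affine map \<open>t \<mapsto> a' t + b'\<close> with \<open>a'\<close> the
  square of a unit of \<open>A\<close>. Once the support of \<open>bump a b\<close> lies in that ray, conjugation by \<open>h\<close>
  only changes the parameters: \<open>h\<^sup>-\<^sup>1 \<circ> bump a b \<circ> h = bump (a a') (b + a b')\<close>. Hence averaging
  \<open>F (bump a b)\<close> first over \<open>b \<in> A\<close> with a translation invariant mean that only sees \<open>b \<rightarrow> -\<infinity>\<close>,
  and then over \<open>ln a\<close> in the additive group of logarithms of unit squares with a translation
  invariant mean, gives a conjugation invariant mean on \<open>H(A) - {id}\<close>. Such means on additive
  subgroups of \<open>\<real>\<close> are cluster points, by Tychonoff's theorem, of averages over Folner boxes.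
\<close>

section \<open>Limits along a filter\<close>

lemma cluster_point_in_closed:
  assumes "closed S" "eventually (\<lambda>x. x \<in> S) F" "inf (nhds m) F \<noteq> bot"
  shows "m \<in> S"
proof (rule ccontr)
  assume "m \<notin> S"
  then have "eventually (\<lambda>x. x \<in> - S) (nhds m)"
    using assms(1) by (intro eventually_nhds_in_open) auto
  then have "eventually (\<lambda>x. False) (inf (nhds m) F)"
    using assms(2) unfolding eventually_inf by blast
  with assms(3) show False
    by (simp add: trivial_limit_def)
qed

lemma compact_box:
  "compact {\<phi> :: 'a \<Rightarrow> real. \<forall>a. \<bar>\<phi> a\<bar> \<le> b a}"
proof -
  have "compactin (product_topology (\<lambda>_. euclideanreal) UNIV) (Pi\<^sub>E UNIV (\<lambda>a. {-b a..b a}))"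
    by (simp add: compactin_PiE)
  moreover have "Pi\<^sub>E UNIV (\<lambda>a. {-b a..b a}) = {\<phi>. \<forall>a. \<bar>\<phi> a\<bar> \<le> b a}"
    by (auto simp: PiE_iff abs_le_iff) (metis minus_le_iff)+
  ultimately show ?thesis
    by (simp add: euclidean_product_topology)
qed

lemma ex_clipped_cluster_point:
  fixes F :: "'i filter"
  assumes "F \<noteq> bot"
  obtains \<psi> :: "'i \<Rightarrow> ('i \<Rightarrow> real) \<Rightarrow> real" and \<Lambda> where
    "\<And>a B. eventually (\<lambda>i. \<bar>a i\<bar> \<le> B) F \<Longrightarrow> eventually (\<lambda>i. \<psi> i a = a i) F"
    "\<And>a a'. eventually (\<lambda>i. a i = a' i) F \<Longrightarrow> eventually (\<lambda>i. \<psi> i a = \<psi> i a') F"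
    "\<And>S. closed S \<Longrightarrow> eventually (\<lambda>i. \<psi> i \<in> S) F \<Longrightarrow> \<Lambda> \<in> S"
proof -
  \<comment> \<open>Clipping every net at an eventual bound puts all the clipped nets into one compact box
    (Tychonoff), so they have a common cluster point.\<close>
  define b where "b a = (SOME K. eventually (\<lambda>i. \<bar>a i\<bar> \<le> K) F)" for a :: "'i \<Rightarrow> real"
  define \<psi> where "\<psi> i a = (if \<bar>a i\<bar> \<le> b a then a i else 0)" for i a
  have "eventually (\<lambda>\<phi>. \<phi> \<in> {\<phi>. \<forall>a. \<bar>\<phi> a\<bar> \<le> \<bar>b a\<bar>}) (filtermap \<psi> F)"
    by (simp add: eventually_filtermap \<psi>_def)
  moreover have "filtermap \<psi> F \<noteq> bot"
    using assms by (simp add: filtermap_bot_iff)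
  ultimately obtain \<Lambda> where \<Lambda>: "inf (nhds \<Lambda>) (filtermap \<psi> F) \<noteq> bot"
    using compact_box[of "\<lambda>a. \<bar>b a\<bar>", unfolded compact_filter] by blast
  show thesis
  proof
    fix a :: "'i \<Rightarrow> real" and B assume "eventually (\<lambda>i. \<bar>a i\<bar> \<le> B) F"
    then have "eventually (\<lambda>i. \<bar>a i\<bar> \<le> b a) F"
      unfolding b_def by (rule someI)
    then show "eventually (\<lambda>i. \<psi> i a = a i) F"
      by eventually_elim (simp add: \<psi>_def)
  next
    fix a a' :: "'i \<Rightarrow> real" assume eq: "eventually (\<lambda>i. a i = a' i) F"
    then have "(\<lambda>K. eventually (\<lambda>i. \<bar>a i\<bar> \<le> K) F) = (\<lambda>K. eventually (\<lambda>i. \<bar>a' i\<bar> \<le> K) F)"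
      by (intro ext eventually_subst) (auto elim: eventually_mono)
    then have "b a = b a'"
      unfolding b_def by simp
    from eq show "eventually (\<lambda>i. \<psi> i a = \<psi> i a') F"
      by eventually_elim (simp add: \<psi>_def \<open>b a = b a'\<close>)
  next
    fix S assume "closed S" "eventually (\<lambda>i. \<psi> i \<in> S) F"
    then show "\<Lambda> \<in> S"
      using cluster_point_in_closed[OF _ _ \<Lambda>] by (simp add: eventually_filtermap)
  qed
qed

locale filter_limit =
  fixes F :: "'i filter" and \<Lambda> :: "('i \<Rightarrow> real) \<Rightarrow> real"
  assumes limit_tendsto: "\<And>a L. (a \<longlongrightarrow> L) F \<Longrightarrow> \<Lambda> a = L"
    and limit_cong: "\<And>a a'. eventually (\<lambda>i. a i = a' i) F \<Longrightarrow> \<Lambda> a = \<Lambda> a'"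
    and limit_add: "\<And>a a' B. eventually (\<lambda>i. \<bar>a i\<bar> \<le> B) F \<Longrightarrow> eventually (\<lambda>i. \<bar>a' i\<bar> \<le> B) F \<Longrightarrow>
      \<Lambda> (\<lambda>i. a i + a' i) = \<Lambda> a + \<Lambda> a'"
    and limit_cmult: "\<And>a c B. eventually (\<lambda>i. \<bar>a i\<bar> \<le> B) F \<Longrightarrow> \<Lambda> (\<lambda>i. c * a i) = c * \<Lambda> a"
    and limit_nonneg: "\<And>a B. eventually (\<lambda>i. \<bar>a i\<bar> \<le> B) F \<Longrightarrow> eventually (\<lambda>i. 0 \<le> a i) F \<Longrightarrow> 0 \<le> \<Lambda> a"
begin

lemma limit_eq_if_diff_tendsto_zero:
  assumes "eventually (\<lambda>i. \<bar>a i\<bar> \<le> B) F" "eventually (\<lambda>i. \<bar>a' i\<bar> \<le> B) F"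
    and "((\<lambda>i. a i - a' i) \<longlongrightarrow> 0) F"
  shows "\<Lambda> a = \<Lambda> a'"
proof -
  from assms(1,2) have "eventually (\<lambda>i. \<bar>a i - a' i\<bar> \<le> 2 * \<bar>B\<bar>) F"
    by eventually_elim linarith
  moreover from assms(2) have "eventually (\<lambda>i. \<bar>a' i\<bar> \<le> 2 * \<bar>B\<bar>) F"
    by eventually_elim linarith
  ultimately have "\<Lambda> (\<lambda>i. (a i - a' i) + a' i) = \<Lambda> (\<lambda>i. a i - a' i) + \<Lambda> a'"
    by (rule limit_add)
  then show ?thesis
    using limit_tendsto[OF assms(3)] by simp
qed

end

lemma ex_filter_limit:
  fixes F :: "'i filter"
  assumes "F \<noteq> bot"
  shows "\<exists>\<Lambda>. filter_limit F \<Lambda>"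
proof -
  obtain \<psi> :: "'i \<Rightarrow> ('i \<Rightarrow> real) \<Rightarrow> real" and \<Lambda>
    where \<psi>_eq: "\<And>a B. eventually (\<lambda>i. \<bar>a i\<bar> \<le> B) F \<Longrightarrow> eventually (\<lambda>i. \<psi> i a = a i) F"
      and \<psi>_cong: "\<And>a a'. eventually (\<lambda>i. a i = a' i) F \<Longrightarrow> eventually (\<lambda>i. \<psi> i a = \<psi> i a') F"
      and closed: "\<And>S. closed S \<Longrightarrow> eventually (\<lambda>i. \<psi> i \<in> S) F \<Longrightarrow> \<Lambda> \<in> S"
    using ex_clipped_cluster_point[OF assms] by blast
  have "filter_limit F \<Lambda>"
  proof
      fix a :: "'i \<Rightarrow> real" and L assume lim: "(a \<longlongrightarrow> L) F"
      have close: "\<bar>\<Lambda> a - L\<bar> \<le> e" if "e > 0" for e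
      proof -
        have "eventually (\<lambda>i. \<bar>a i - L\<bar> < e) F"
          using lim that by (simp add: tendsto_iff dist_real_def)
        then have near: "eventually (\<lambda>i. \<bar>a i - L\<bar> \<le> e) F"
          by eventually_elim simp
        then have "eventually (\<lambda>i. \<bar>a i\<bar> \<le> \<bar>L\<bar> + e) F"
          by eventually_elim linarith
        from near \<psi>_eq[OF this] have "eventually (\<lambda>i. \<psi> i \<in> {\<phi>. \<bar>\<phi> a - L\<bar> \<le> e}) F"
          by eventually_elim simp
        then have "\<Lambda> \<in> {\<phi>. \<bar>\<phi> a - L\<bar> \<le> e}"
          by (rule closed[rotated]) (intro closed_Collect_le continuous_intros; simp)
        then show ?thesis
          by simp
      qed
      have "\<bar>\<Lambda> a - L\<bar> \<le> 0"
        by (rule field_le_epsilon) (simp add: close)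
      then show "\<Lambda> a = L"
        by simp
    next
      fix a a' :: "'i \<Rightarrow> real" assume "eventually (\<lambda>i. a i = a' i) F"
      then have "eventually (\<lambda>i. \<psi> i \<in> {\<phi>. \<phi> a = \<phi> a'}) F"
        by (simp add: \<psi>_cong)
      then have "\<Lambda> \<in> {\<phi>. \<phi> a = \<phi> a'}"
        by (rule closed[rotated]) (intro closed_Collect_eq continuous_intros; simp)
      then show "\<Lambda> a = \<Lambda> a'"
        by simp
    next
      fix a a' :: "'i \<Rightarrow> real" and B
      assume a: "eventually (\<lambda>i. \<bar>a i\<bar> \<le> B) F" and a': "eventually (\<lambda>i. \<bar>a' i\<bar> \<le> B) F"
      then have "eventually (\<lambda>i. \<bar>a i + a' i\<bar> \<le> 2 * B) F"
        by eventually_elim linarith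
      with \<psi>_eq[OF a] \<psi>_eq[OF a'] \<psi>_eq[OF this]
      have "eventually (\<lambda>i. \<psi> i \<in> {\<phi>. \<phi> (\<lambda>i. a i + a' i) = \<phi> a + \<phi> a'}) F"
        by eventually_elim simp
      then have "\<Lambda> \<in> {\<phi>. \<phi> (\<lambda>i. a i + a' i) = \<phi> a + \<phi> a'}"
        by (rule closed[rotated]) (intro closed_Collect_eq continuous_intros; simp)
      then show "\<Lambda> (\<lambda>i. a i + a' i) = \<Lambda> a + \<Lambda> a'"
        by simp
    next
      fix a :: "'i \<Rightarrow> real" and c B assume a: "eventually (\<lambda>i. \<bar>a i\<bar> \<le> B) F"
      then have "eventually (\<lambda>i. \<bar>c * a i\<bar> \<le> \<bar>c\<bar> * B) F"
        by eventually_elim (simp add: abs_mult mult_left_mono)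
      with \<psi>_eq[OF a] \<psi>_eq[OF this]
      have "eventually (\<lambda>i. \<psi> i \<in> {\<phi>. \<phi> (\<lambda>i. c * a i) = c * \<phi> a}) F"
        by eventually_elim simp
      then have "\<Lambda> \<in> {\<phi>. \<phi> (\<lambda>i. c * a i) = c * \<phi> a}"
        by (rule closed[rotated]) (intro closed_Collect_eq continuous_intros; simp)
      then show "\<Lambda> (\<lambda>i. c * a i) = c * \<Lambda> a"
        by simp
    next
      fix a :: "'i \<Rightarrow> real" and B
      assume a: "eventually (\<lambda>i. \<bar>a i\<bar> \<le> B) F" and "eventually (\<lambda>i. 0 \<le> a i) F"
      with \<psi>_eq[OF a] have "eventually (\<lambda>i. \<psi> i \<in> {\<phi>. 0 \<le> \<phi> a}) F"
        by eventually_elim simp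
      then have "\<Lambda> \<in> {\<phi>. 0 \<le> \<phi> a}"
        by (rule closed[rotated]) (intro closed_Collect_le continuous_intros; simp)
      then show "0 \<le> \<Lambda> a"
        by simp
  qed
  then show ?thesis
    by blast
qed

section \<open>Means\<close>

lemma is_mean_add:
  "is_mean X m \<Longrightarrow> bdd_on X f \<Longrightarrow> bdd_on X g \<Longrightarrow> m (\<lambda>x. f x + g x) = m f + m g"
  by (simp add: is_mean_def)

lemma is_mean_cmult: "is_mean X m \<Longrightarrow> bdd_on X f \<Longrightarrow> m (\<lambda>x. c * f x) = c * m f"
  by (simp add: is_mean_def)

lemma is_mean_nonneg: "is_mean X m \<Longrightarrow> bdd_on X f \<Longrightarrow> \<forall>x\<in>X. 0 \<le> f x \<Longrightarrow> 0 \<le> m f"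
  by (simp add: is_mean_def)

lemma bdd_onI: "\<forall>x\<in>X. \<bar>f x\<bar> \<le> B \<Longrightarrow> bdd_on X f"
  unfolding bdd_on_def by blast

lemma is_meanI:
  assumes "\<And>f g B. \<forall>x\<in>X. \<bar>f x\<bar> \<le> B \<Longrightarrow> \<forall>x\<in>X. \<bar>g x\<bar> \<le> B \<Longrightarrow> m (\<lambda>x. f x + g x) = m f + m g"
    and "\<And>f c B. \<forall>x\<in>X. \<bar>f x\<bar> \<le> B \<Longrightarrow> m (\<lambda>x. c * f x) = c * m f"
    and "\<And>f B. \<forall>x\<in>X. \<bar>f x\<bar> \<le> B \<Longrightarrow> \<forall>x\<in>X. 0 \<le> f x \<Longrightarrow> 0 \<le> m f"
    and "m (\<lambda>x. 1) = 1"
  shows "is_mean X m"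
  unfolding is_mean_def bdd_on_def
proof (intro conjI allI impI)
  fix f g :: "'a \<Rightarrow> real"
  assume "\<exists>B. \<forall>x\<in>X. \<bar>f x\<bar> \<le> B" "\<exists>B. \<forall>x\<in>X. \<bar>g x\<bar> \<le> B"
  then obtain B B' :: real where "\<forall>x\<in>X. \<bar>f x\<bar> \<le> B" "\<forall>x\<in>X. \<bar>g x\<bar> \<le> B'"
    by blast
  then have "\<forall>x\<in>X. \<bar>f x\<bar> \<le> max B B'" "\<forall>x\<in>X. \<bar>g x\<bar> \<le> max B B'"
    by (auto simp: le_max_iff_disj)
  then show "m (\<lambda>x. f x + g x) = m f + m g"
    by (rule assms(1))
qed (use assms(2-) in blast)+

lemma bdd_on_add: "bdd_on X f \<Longrightarrow> bdd_on X g \<Longrightarrow> bdd_on X (\<lambda>x. f x + g x)"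
  unfolding bdd_on_def by (fastforce intro: order_trans[OF abs_triangle_ineq] add_mono)

lemma bdd_on_cmult: "bdd_on X f \<Longrightarrow> bdd_on X (\<lambda>x. c * f x)"
  unfolding bdd_on_def by (fastforce simp: abs_mult intro: mult_left_mono)

lemma is_mean_const:
  assumes "is_mean X m"
  shows "m (\<lambda>x. c) = c"
proof -
  have "m (\<lambda>x. c * 1) = c * m (\<lambda>x. 1)"
    by (rule is_mean_cmult[OF assms]) (auto intro: bdd_onI)
  with assms show ?thesis
    by (simp add: is_mean_def)
qed

lemma is_mean_bound:
  assumes m: "is_mean X m" and B: "\<forall>x\<in>X. \<bar>f x\<bar> \<le> B"
  shows "\<bar>m f\<bar> \<le> B"
proof -
  have f: "bdd_on X f"
    using B by (rule bdd_onI)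
  have sf: "bdd_on X (\<lambda>x. s * f x)" for s
    using B by (intro bdd_onI[of _ _ "\<bar>s\<bar> * B"]) (simp add: abs_mult mult_left_mono)
  have "bdd_on X (\<lambda>x. B)"
    by (rule bdd_onI[of _ _ "\<bar>B\<bar>"]) simp
  then have affine: "m (\<lambda>x. B + s * f x) = B + s * m f" for s
    using is_mean_add[OF m _ sf] is_mean_const[OF m] is_mean_cmult[OF m f] by simp
  have "0 \<le> m (\<lambda>x. B + s * f x)" if "s = 1 \<or> s = -1" for s
    using B that by (intro is_mean_nonneg[OF m] bdd_onI[of _ _ "2 * B"]) (auto simp: abs_le_iff)
  from this[of 1] this[of "-1"] show ?thesis
    unfolding affine by linarith
qed

lemma is_mean_cong:
  assumes m: "is_mean X m" and f: "bdd_on X f" and fg: "\<forall>x\<in>X. f x = g x"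
  shows "m f = m g"
proof -
  have d: "bdd_on X (\<lambda>x. g x - f x)"
    using fg by (auto simp: bdd_on_def)
  have "m g = m (\<lambda>x. f x + (g x - f x))"
    by simp
  also have "\<dots> = m f"
    using is_mean_add[OF m f d] is_mean_bound[OF m, of "\<lambda>x. g x - f x" 0] fg by simp
  finally show ?thesis ..
qed

lemma is_mean_iterate:
  assumes \<mu>: "is_mean L \<mu>" and \<nu>: "is_mean B \<nu>"
    and k: "\<And>l b. l \<in> L \<Longrightarrow> b \<in> B \<Longrightarrow> k l b \<in> X"
  shows "is_mean X (\<lambda>F. \<mu> (\<lambda>l. \<nu> (\<lambda>b. F (k l b))))"
proof -
  define inner where "inner F = (\<lambda>l. \<nu> (\<lambda>b. F (k l b)))" for F
  have inner_bdd: "bdd_on B (\<lambda>b. F (k l b))" if "bdd_on X F" "l \<in> L" for F l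
    using that k by (auto simp: bdd_on_def)
  have outer_bdd: "bdd_on L (inner F)" if F: "bdd_on X F" for F
  proof -
    obtain c where "\<forall>x\<in>X. \<bar>F x\<bar> \<le> c"
      using F unfolding bdd_on_def by blast
    then have "\<forall>l\<in>L. \<bar>inner F l\<bar> \<le> c"
      unfolding inner_def using k by (auto intro!: is_mean_bound[OF \<nu>])
    then show ?thesis
      by (rule bdd_onI)
  qed
  have "is_mean X (\<lambda>F. \<mu> (inner F))"
    unfolding is_mean_def
  proof (intro conjI allI impI)
    fix F G assume F: "bdd_on X F" and G: "bdd_on X G"
    have "\<forall>l\<in>L. inner F l + inner G l = inner (\<lambda>x. F x + G x) l"
      unfolding inner_def using F G by (simp add: is_mean_add[OF \<nu>] inner_bdd)
    then have "\<mu> (\<lambda>l. inner F l + inner G l) = \<mu> (inner (\<lambda>x. F x + G x))"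
      by (rule is_mean_cong[OF \<mu> bdd_on_add[OF outer_bdd[OF F] outer_bdd[OF G]]])
    then show "\<mu> (inner (\<lambda>x. F x + G x)) = \<mu> (inner F) + \<mu> (inner G)"
      using is_mean_add[OF \<mu> outer_bdd[OF F] outer_bdd[OF G]] by simp
  next
    fix F c assume F: "bdd_on X F"
    have "\<forall>l\<in>L. c * inner F l = inner (\<lambda>x. c * F x) l"
      unfolding inner_def using F by (simp add: is_mean_cmult[OF \<nu>] inner_bdd)
    then have "\<mu> (\<lambda>l. c * inner F l) = \<mu> (inner (\<lambda>x. c * F x))"
      by (rule is_mean_cong[OF \<mu> bdd_on_cmult[OF outer_bdd[OF F]]])
    then show "\<mu> (inner (\<lambda>x. c * F x)) = c * \<mu> (inner F)"
      using is_mean_cmult[OF \<mu> outer_bdd[OF F]] by simp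
  next
    fix F assume F: "bdd_on X F" and "\<forall>x\<in>X. 0 \<le> F x"
    then have "\<forall>l\<in>L. 0 \<le> inner F l"
      unfolding inner_def using k by (auto intro!: is_mean_nonneg[OF \<nu>] inner_bdd)
    then show "0 \<le> \<mu> (inner F)"
      by (rule is_mean_nonneg[OF \<mu> outer_bdd[OF F]])
  next
    show "\<mu> (inner (\<lambda>x. 1)) = 1"
      unfolding inner_def is_mean_const[OF \<nu>] by (rule is_mean_const[OF \<mu>])
  qed
  then show ?thesis
    unfolding inner_def .
qed

section \<open>Invariant means on additive subgroups of the reals\<close>

definition add_subgroup :: "real set \<Rightarrow> bool" where
  "add_subgroup G \<longleftrightarrow> 0 \<in> G \<and> (\<forall>x\<in>G. \<forall>y\<in>G. x - y \<in> G)"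

context
  fixes G assumes G: "add_subgroup G"
begin

lemma add_subgroup_zero: "0 \<in> G"
  using G by (simp add: add_subgroup_def)

lemma add_subgroup_diff: "x \<in> G \<Longrightarrow> y \<in> G \<Longrightarrow> x - y \<in> G"
  using G by (simp add: add_subgroup_def)

lemma add_subgroup_minus: "x \<in> G \<Longrightarrow> - x \<in> G"
  using add_subgroup_diff[OF add_subgroup_zero] by simp

lemma add_subgroup_add: "x \<in> G \<Longrightarrow> y \<in> G \<Longrightarrow> x + y \<in> G"
  using add_subgroup_diff[of x "- y"] add_subgroup_minus by simp

lemma add_subgroup_of_nat_mult: "x \<in> G \<Longrightarrow> real k * x \<in> G"
  by (induction k) (simp_all add: add_subgroup_zero add_subgroup_add distrib_right)

lemma add_subgroup_sum_list_abs: "set ss \<subseteq> G \<Longrightarrow> (\<Sum>s\<leftarrow>ss. \<bar>s\<bar>) \<in> G"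
  by (induction ss) (auto simp: add_subgroup_zero abs_if intro!: add_subgroup_add add_subgroup_diff)

end

fun box_avg :: "real list \<Rightarrow> nat \<Rightarrow> (real \<Rightarrow> real) \<Rightarrow> real \<Rightarrow> real" where
  "box_avg [] n f x = f x"
| "box_avg (s # ss) n f x = (\<Sum>k<n. box_avg ss n f (x + real k * s)) / real n"

lemma box_avg_add: "box_avg ss n (\<lambda>y. f y + g y) x = box_avg ss n f x + box_avg ss n g x"
  by (induction ss arbitrary: x) (simp_all add: sum.distrib add_divide_distrib)

lemma box_avg_cmult: "box_avg ss n (\<lambda>y. c * f y) x = c * box_avg ss n f x"
  by (induction ss arbitrary: x) (simp_all add: sum_distrib_left)

lemma box_avg_shift: "box_avg ss n (\<lambda>y. f (y + t)) x = box_avg ss n f (x + t)"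
  by (induction ss arbitrary: x) (simp_all add: algebra_simps)

lemma box_avg_const: "n > 0 \<Longrightarrow> box_avg ss n (\<lambda>y. c) x = c"
  by (induction ss arbitrary: x) simp_all

lemma box_avg_between:
  assumes "add_subgroup G" "set ss \<subseteq> G" "x \<in> G" "n > 0"
    and "\<forall>y\<in>G. c \<le> f y \<and> f y \<le> d"
  shows "c \<le> box_avg ss n f x \<and> box_avg ss n f x \<le> d"
  using assms(2,3)
proof (induction ss arbitrary: x)
  case Nil
  then show ?case using assms(5) by simp
next
  case (Cons s ss)
  have "c \<le> box_avg ss n f (x + real k * s) \<and> box_avg ss n f (x + real k * s) \<le> d" for k
    using Cons.prems by (intro Cons.IH) (auto intro: add_subgroup_add add_subgroup_of_nat_mult assms(1))
  then have "real n * c \<le> (\<Sum>k<n. box_avg ss n f (x + real k * s))"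
    "(\<Sum>k<n. box_avg ss n f (x + real k * s)) \<le> real n * d"
    using sum_mono[of "{..<n}" "\<lambda>_. c"] sum_mono[of "{..<n}" _ "\<lambda>_. d"] by auto
  then show ?case
    using \<open>n > 0\<close> by (simp add: pos_le_divide_eq pos_divide_le_eq mult.commute)
qed

lemma box_avg_cong_below:
  assumes "add_subgroup G" "set ss \<subseteq> G" "x \<in> G"
    and "\<forall>y\<in>G. y \<le> x + real n * (\<Sum>s\<leftarrow>ss. \<bar>s\<bar>) \<longrightarrow> f y = g y"
  shows "box_avg ss n f x = box_avg ss n g x"
  using assms(2-)
proof (induction ss arbitrary: x)
  case Nil
  then show ?case by simp
next
  case (Cons s ss)
  have "box_avg ss n f (x + real k * s) = box_avg ss n g (x + real k * s)" if "k < n" for k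
  proof (rule Cons.IH)
    have "real k * s \<le> real k * \<bar>s\<bar>"
      by (simp add: mult_left_mono)
    also have "\<dots> \<le> real n * \<bar>s\<bar>"
      using that by (simp add: mult_right_mono)
    finally have "x + real k * s + real n * (\<Sum>s\<leftarrow>ss. \<bar>s\<bar>) \<le> x + real n * (\<Sum>s\<leftarrow>s # ss. \<bar>s\<bar>)"
      by (simp add: distrib_left)
    then show "\<forall>y\<in>G. y \<le> x + real k * s + real n * (\<Sum>s\<leftarrow>ss. \<bar>s\<bar>) \<longrightarrow> f y = g y"
      using Cons.prems(3) by fastforce
  qed (use Cons.prems in \<open>auto intro: add_subgroup_add add_subgroup_of_nat_mult assms(1)\<close>)
  then show ?case
    by simp
qed

lemma box_avg_Cons_shift:
  "box_avg (s # ss) n f (x + s) - box_avg (s # ss) n f x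
    = (box_avg ss n f (x + real n * s) - box_avg ss n f x) / real n"
proof -
  define g where "g k = box_avg ss n f (x + real k * s)" for k
  have "(\<Sum>k<n. box_avg ss n f (x + s + real k * s)) = (\<Sum>k<n. g (Suc k))"
    unfolding g_def by (intro sum.cong) (simp_all add: algebra_simps)
  then have "box_avg (s # ss) n f (x + s) - box_avg (s # ss) n f x
      = ((\<Sum>k<n. g (Suc k)) - (\<Sum>k<n. g k)) / real n"
    by (simp add: g_def diff_divide_distrib)
  also have "\<dots> = (g n - g 0) / real n"
    by (simp add: sum_subtractf[symmetric] sum_lessThan_telescope)
  finally show ?thesis
    by (simp add: g_def)
qed

lemma box_avg_almost_invariant:
  assumes G: "add_subgroup G" and "set ss \<subseteq> G" "x \<in> G" "n > 0" "t \<in> set ss"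
    and B: "\<forall>y\<in>G. \<bar>f y\<bar> \<le> B"
  shows "\<bar>box_avg ss n f (x + t) - box_avg ss n f x\<bar> \<le> 2 * B / real n"
  using assms(2,3,5)
proof (induction ss arbitrary: x)
  case Nil
  then show ?case by simp
next
  case (Cons s ss)
  have box: "x + real k * s \<in> G" for k
    using Cons.prems by (auto intro: add_subgroup_add add_subgroup_of_nat_mult G)
  have fB: "\<forall>y\<in>G. - B \<le> f y \<and> f y \<le> B"
    using B by (auto simp: abs_le_iff)
  have bound: "\<bar>box_avg ss n f y\<bar> \<le> B" if "y \<in> G" for y
    using box_avg_between[OF G _ that \<open>n > 0\<close> fB, of ss] Cons.prems(1) by (simp add: abs_le_iff)
  show ?case
  proof (cases "t = s")
    case True
    have "\<bar>box_avg ss n f (x + real n * s) - box_avg ss n f x\<bar> \<le> 2 * B"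
      using bound[OF box] bound[OF Cons.prems(2)] by (smt (verit))
    then show ?thesis
      unfolding True box_avg_Cons_shift using \<open>n > 0\<close> by (simp add: abs_divide divide_right_mono)
  next
    case False
    with Cons.prems have "set ss \<subseteq> G" "t \<in> set ss"
      by auto
    then have "\<bar>box_avg ss n f (x + real k * s + t) - box_avg ss n f (x + real k * s)\<bar> \<le> 2 * B / real n" for k
      using Cons.IH[OF _ box] by blast
    then have "\<bar>\<Sum>k<n. box_avg ss n f (x + real k * s + t) - box_avg ss n f (x + real k * s)\<bar>
        \<le> real n * (2 * B / real n)"
      using order_trans[OF sum_abs sum_mono[of "{..<n}" _ "\<lambda>_. 2 * B / real n"]] by simp
    moreover have "box_avg (s # ss) n f (x + t) - box_avg (s # ss) n f x
        = (\<Sum>k<n. box_avg ss n f (x + real k * s + t) - box_avg ss n f (x + real k * s)) / real n"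
      by (simp add: sum_subtractf diff_divide_distrib add_ac)
    ultimately show ?thesis
      using \<open>n > 0\<close> by (simp add: abs_divide pos_divide_le_eq mult.commute)
  qed
qed

definition folner :: "real set \<Rightarrow> (real list \<times> nat) filter" where
  "folner G = Abs_filter (\<lambda>P. \<exists>ts N. set ts \<subseteq> G \<and>
     (\<forall>ss n. set ts \<subseteq> set ss \<and> set ss \<subseteq> G \<and> N \<le> n \<longrightarrow> P (ss, n)))"

lemma eventually_folner:
  "eventually P (folner G) \<longleftrightarrow>
     (\<exists>ts N. set ts \<subseteq> G \<and> (\<forall>ss n. set ts \<subseteq> set ss \<and> set ss \<subseteq> G \<and> N \<le> n \<longrightarrow> P (ss, n)))"
  unfolding folner_def
proof (rule eventually_Abs_filter, rule is_filter.intro)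
  show "\<exists>ts N. set ts \<subseteq> G \<and> (\<forall>ss n. set ts \<subseteq> set ss \<and> set ss \<subseteq> G \<and> N \<le> n \<longrightarrow> True)"
    by (intro exI[of _ "[]"]) simp
next
  fix P Q :: "real list \<times> nat \<Rightarrow> bool"
  assume "\<exists>ts N. set ts \<subseteq> G \<and> (\<forall>ss n. set ts \<subseteq> set ss \<and> set ss \<subseteq> G \<and> N \<le> n \<longrightarrow> P (ss, n))"
    and "\<exists>ts N. set ts \<subseteq> G \<and> (\<forall>ss n. set ts \<subseteq> set ss \<and> set ss \<subseteq> G \<and> N \<le> n \<longrightarrow> Q (ss, n))"
  then obtain ts N ts' N' where
    "set ts \<subseteq> G" "\<forall>ss n. set ts \<subseteq> set ss \<and> set ss \<subseteq> G \<and> N \<le> n \<longrightarrow> P (ss, n)"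
    "set ts' \<subseteq> G" "\<forall>ss n. set ts' \<subseteq> set ss \<and> set ss \<subseteq> G \<and> N' \<le> n \<longrightarrow> Q (ss, n)"
    by blast
  then show "\<exists>ts N. set ts \<subseteq> G \<and> (\<forall>ss n. set ts \<subseteq> set ss \<and> set ss \<subseteq> G \<and> N \<le> n \<longrightarrow> P (ss, n) \<and> Q (ss, n))"
    by (intro exI[of _ "ts @ ts'"] exI[of _ "max N N'"]) auto
next
  fix P Q :: "real list \<times> nat \<Rightarrow> bool"
  assume "\<forall>j. P j \<longrightarrow> Q j"
    and "\<exists>ts N. set ts \<subseteq> G \<and> (\<forall>ss n. set ts \<subseteq> set ss \<and> set ss \<subseteq> G \<and> N \<le> n \<longrightarrow> P (ss, n))"
  then show "\<exists>ts N. set ts \<subseteq> G \<and> (\<forall>ss n. set ts \<subseteq> set ss \<and> set ss \<subseteq> G \<and> N \<le> n \<longrightarrow> Q (ss, n))"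
    by meson
qed

lemma folner_neq_bot: "folner G \<noteq> bot"
proof
  assume "folner G = bot"
  then have "eventually (\<lambda>_. False) (folner G)"
    by simp
  then obtain ts and N :: nat where "set ts \<subseteq> G"
    and none: "\<forall>ss n. set ts \<subseteq> set ss \<and> set ss \<subseteq> G \<and> N \<le> n \<longrightarrow> False"
    unfolding eventually_folner by blast
  then show False
    using none by (meson order_refl subset_refl)
qed

lemma eventually_folner_large: "eventually (\<lambda>j. set (fst j) \<subseteq> G \<and> N \<le> snd j) (folner G)"
  unfolding eventually_folner by (intro exI[of _ "[]"] exI[of _ N]) auto

lemma eventually_folner_mem: "t \<in> G \<Longrightarrow> eventually (\<lambda>j. t \<in> set (fst j)) (folner G)"
  unfolding eventually_folner by (intro exI[of _ "[t]"]) auto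

text \<open>Starting the box at \<open>-2 n \<Sigma>|s|\<close> keeps every averaged point below \<open>-n \<Sigma>|s|\<close>, so the limit
  mean only depends on values near \<open>-\<infinity>\<close>.\<close>

definition folner_avg :: "(real \<Rightarrow> real) \<Rightarrow> real list \<times> nat \<Rightarrow> real" where
  "folner_avg f = (\<lambda>(ss, n). box_avg ss n f (- 2 * real n * (\<Sum>s\<leftarrow>ss. \<bar>s\<bar>)))"

lemma folner_avg_add: "folner_avg (\<lambda>x. f x + g x) = (\<lambda>j. folner_avg f j + folner_avg g j)"
  by (simp add: folner_avg_def box_avg_add fun_eq_iff split: prod.split)

lemma folner_avg_cmult: "folner_avg (\<lambda>x. c * f x) = (\<lambda>j. c * folner_avg f j)"
  by (simp add: folner_avg_def box_avg_cmult fun_eq_iff split: prod.split)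

lemma folner_avg_const: "snd j > 0 \<Longrightarrow> folner_avg (\<lambda>x. c) j = c"
  by (cases j) (simp add: folner_avg_def box_avg_const)

lemma folner_start_mem:
  assumes "add_subgroup G" "set ss \<subseteq> G"
  shows "- 2 * real n * (\<Sum>s\<leftarrow>ss. \<bar>s\<bar>) \<in> G"
proof -
  have "real (2 * n) * - (\<Sum>s\<leftarrow>ss. \<bar>s\<bar>) \<in> G"
    using assms by (intro add_subgroup_of_nat_mult add_subgroup_minus add_subgroup_sum_list_abs)
  then show ?thesis
    by simp
qed

lemma folner_avg_between:
  assumes "add_subgroup G" "set (fst j) \<subseteq> G" "snd j > 0" "\<forall>y\<in>G. c \<le> f y \<and> f y \<le> d"
  shows "c \<le> folner_avg f j \<and> folner_avg f j \<le> d"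
proof -
  obtain ss n where j: "j = (ss, n)"
    by (cases j)
  have ss: "set ss \<subseteq> G" and "n > 0"
    using assms(2,3) by (simp_all add: j)
  show ?thesis
    using box_avg_between[OF assms(1) ss folner_start_mem[OF assms(1) ss] \<open>n > 0\<close> assms(4)]
    by (simp add: j folner_avg_def)
qed

lemma folner_avg_almost_invariant:
  assumes "add_subgroup G" "set (fst j) \<subseteq> G" "snd j > 0" "t \<in> set (fst j)" "\<forall>y\<in>G. \<bar>f y\<bar> \<le> B"
  shows "\<bar>folner_avg (\<lambda>x. f (x + t)) j - folner_avg f j\<bar> \<le> 2 * B / real (snd j)"
proof -
  obtain ss n where j: "j = (ss, n)"
    by (cases j)
  have ss: "set ss \<subseteq> G" and "n > 0" "t \<in> set ss"
    using assms(2-4) by (simp_all add: j)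
  show ?thesis
    using box_avg_almost_invariant[OF assms(1) ss folner_start_mem[OF assms(1) ss] \<open>n > 0\<close> \<open>t \<in> set ss\<close> assms(5)]
    by (simp add: j folner_avg_def box_avg_shift)
qed

lemma folner_avg_cong_below:
  assumes "add_subgroup G" "set (fst j) \<subseteq> G" "t \<in> set (fst j)" "- R \<le> real (snd j) * \<bar>t\<bar>"
    and "\<forall>y\<in>G. y \<le> R \<longrightarrow> f y = g y"
  shows "folner_avg f j = folner_avg g j"
proof -
  obtain ss n where j: "j = (ss, n)"
    by (cases j)
  have "\<bar>t\<bar> \<le> (\<Sum>s\<leftarrow>ss. \<bar>s\<bar>)"
    using assms(3) by (intro member_le_sum_list) (auto simp: j)
  then have "real n * \<bar>t\<bar> \<le> real n * (\<Sum>s\<leftarrow>ss. \<bar>s\<bar>)"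
    by (rule mult_left_mono) simp
  then have "- 2 * real n * (\<Sum>s\<leftarrow>ss. \<bar>s\<bar>) + real n * (\<Sum>s\<leftarrow>ss. \<bar>s\<bar>) \<le> R"
    using assms(4) by (simp add: j)
  then have below: "\<forall>y\<in>G. y \<le> - 2 * real n * (\<Sum>s\<leftarrow>ss. \<bar>s\<bar>) + real n * (\<Sum>s\<leftarrow>ss. \<bar>s\<bar>) \<longrightarrow> f y = g y"
    using assms(5) by auto
  have ss: "set ss \<subseteq> G"
    using assms(2) by (simp add: j)
  show ?thesis
    using box_avg_cong_below[OF assms(1) ss folner_start_mem[OF assms(1) ss] below]
    by (simp add: j folner_avg_def)
qed

lemma folner_size_at_top: "filterlim (\<lambda>j. real (snd j)) at_top (folner G)"
  unfolding filterlim_at_top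
proof
  fix Z :: real
  from eventually_folner_large[of G "nat \<lceil>Z\<rceil>"] show "eventually (\<lambda>j. Z \<le> real (snd j)) (folner G)"
    by eventually_elim linarith
qed

locale folner_limit = filter_limit "folner G" \<Lambda> for G \<Lambda> +
  assumes add_subgroup: "add_subgroup G"
begin

lemma eventually_good: "eventually (\<lambda>j. set (fst j) \<subseteq> G \<and> N \<le> snd j \<and> 0 < snd j) (folner G)"
  using eventually_folner_large[of G "max N 1"] by eventually_elim auto

lemma eventually_folner_avg_bound:
  assumes "\<forall>x\<in>G. \<bar>f x\<bar> \<le> B"
  shows "eventually (\<lambda>j. \<bar>folner_avg f j\<bar> \<le> B) (folner G)"
proof -
  have fB: "\<forall>x\<in>G. - B \<le> f x \<and> f x \<le> B"
    using assms by (auto simp: abs_le_iff)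
  from eventually_good[of 0] show ?thesis
    by eventually_elim (auto simp: abs_le_iff dest: folner_avg_between[OF add_subgroup _ _ fB])
qed

lemma is_mean_folner_limit: "is_mean G (\<lambda>f. \<Lambda> (folner_avg f))"
proof (rule is_meanI)
  fix f g :: "real \<Rightarrow> real" and B assume "\<forall>x\<in>G. \<bar>f x\<bar> \<le> B" "\<forall>x\<in>G. \<bar>g x\<bar> \<le> B"
  then show "\<Lambda> (folner_avg (\<lambda>x. f x + g x)) = \<Lambda> (folner_avg f) + \<Lambda> (folner_avg g)"
    unfolding folner_avg_add by (intro limit_add eventually_folner_avg_bound)
next
  fix f :: "real \<Rightarrow> real" and c B assume "\<forall>x\<in>G. \<bar>f x\<bar> \<le> B"
  then show "\<Lambda> (folner_avg (\<lambda>x. c * f x)) = c * \<Lambda> (folner_avg f)"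
    unfolding folner_avg_cmult by (intro limit_cmult eventually_folner_avg_bound)
next
  fix f :: "real \<Rightarrow> real" and B assume B: "\<forall>x\<in>G. \<bar>f x\<bar> \<le> B" and "\<forall>x\<in>G. 0 \<le> f x"
  then have fB: "\<forall>x\<in>G. 0 \<le> f x \<and> f x \<le> B"
    by auto
  from eventually_good[of 0] have "eventually (\<lambda>j. 0 \<le> folner_avg f j) (folner G)"
    by eventually_elim (simp add: folner_avg_between[OF add_subgroup _ _ fB])
  then show "0 \<le> \<Lambda> (folner_avg f)"
    using limit_nonneg[OF eventually_folner_avg_bound[OF B]] by blast
next
  from eventually_good[of 0] have "eventually (\<lambda>j. folner_avg (\<lambda>x. 1) j = 1) (folner G)"
    by eventually_elim (simp add: folner_avg_const)
  then have "\<Lambda> (folner_avg (\<lambda>x. 1)) = \<Lambda> (\<lambda>j. 1)"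
    by (rule limit_cong)
  then show "\<Lambda> (folner_avg (\<lambda>x. 1)) = 1"
    using limit_tendsto[OF tendsto_const] by simp
qed

lemma folner_limit_shift:
  assumes f: "bdd_on G f" and t: "t \<in> G"
  shows "\<Lambda> (folner_avg (\<lambda>x. f (x + t))) = \<Lambda> (folner_avg f)"
proof -
  obtain B where B: "\<forall>x\<in>G. \<bar>f x\<bar> \<le> B"
    using f unfolding bdd_on_def by blast
  have Bt: "\<forall>x\<in>G. \<bar>f (x + t)\<bar> \<le> B"
    using B t add_subgroup_add[OF add_subgroup] by blast
  have "((\<lambda>j. 2 * B / real (snd j)) \<longlongrightarrow> 0) (folner G)"
    by (intro tendsto_divide_0[OF tendsto_const] filterlim_at_top_imp_at_infinity folner_size_at_top)
  moreover from eventually_good[of 0] eventually_folner_mem[OF t]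
  have "eventually (\<lambda>j. norm (folner_avg (\<lambda>x. f (x + t)) j - folner_avg f j) \<le> 2 * B / real (snd j)) (folner G)"
    by eventually_elim (simp only: real_norm_def, intro folner_avg_almost_invariant[OF add_subgroup _ _ _ B]; simp)
  ultimately have "((\<lambda>j. folner_avg (\<lambda>x. f (x + t)) j - folner_avg f j) \<longlongrightarrow> 0) (folner G)"
    by (rule Lim_null_comparison[rotated])
  then show ?thesis
    using eventually_folner_avg_bound[OF Bt] eventually_folner_avg_bound[OF B]
    by (intro limit_eq_if_diff_tendsto_zero)
qed

lemma folner_limit_cong_below:
  assumes "G \<noteq> {0}" and fg: "\<forall>x\<in>G. x \<le> R \<longrightarrow> f x = g x"
  shows "\<Lambda> (folner_avg f) = \<Lambda> (folner_avg g)"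
proof -
  obtain t where t: "t \<in> G" "t \<noteq> 0"
    using assms(1) add_subgroup_zero[OF add_subgroup] by blast
  have far: "- R \<le> real (snd j) * \<bar>t\<bar>" if "nat \<lceil>- R / \<bar>t\<bar>\<rceil> \<le> snd j" for j
  proof -
    have "- R / \<bar>t\<bar> \<le> real (snd j)"
      using that by linarith
    moreover have "0 < \<bar>t\<bar>"
      using t(2) by simp
    ultimately show ?thesis
      by (metis pos_divide_le_eq)
  qed
  from eventually_good[of "nat \<lceil>- R / \<bar>t\<bar>\<rceil>"] eventually_folner_mem[OF t(1)]
  have "eventually (\<lambda>j. folner_avg f j = folner_avg g j) (folner G)"
    by eventually_elim (simp add: folner_avg_cong_below[OF add_subgroup _ _ far fg])
  then show ?thesis
    by (rule limit_cong)
qed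

end

lemma ex_invariant_mean:
  assumes "add_subgroup G"
  obtains \<mu> where "is_mean G \<mu>"
    and "\<And>f t. bdd_on G f \<Longrightarrow> t \<in> G \<Longrightarrow> \<mu> (\<lambda>x. f (x + t)) = \<mu> f"
    and "\<And>f g R. G \<noteq> {0} \<Longrightarrow> \<forall>x\<in>G. x \<le> R \<longrightarrow> f x = g x \<Longrightarrow> \<mu> f = \<mu> g"
proof -
  obtain \<Lambda> where "filter_limit (folner G) \<Lambda>"
    using ex_filter_limit[OF folner_neq_bot] by blast
  then interpret folner_limit G \<Lambda>
    using assms by (simp add: folner_limit_def folner_limit_axioms_def)
  show thesis
    using is_mean_folner_limit folner_limit_shift folner_limit_cong_below by (rule that)
qed

section \<open>The projective line as a circle\<close>

lemma P1_to_circle_Some: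
  "P1_to_circle (Some t) = Complex ((t\<^sup>2 - 1) / (t\<^sup>2 + 1)) (2 * t / (t\<^sup>2 + 1))"
  by (simp add: P1_to_circle_def)

lemma P1_to_circle_None: "P1_to_circle None = 1"
  by (simp add: P1_to_circle_def)

lemma cmod_eq_1_iff: "cmod z = 1 \<longleftrightarrow> (Re z)\<^sup>2 + (Im z)\<^sup>2 = 1"
  by (simp add: cmod_def)

lemma square_plus_one_neq_zero [simp]: "(t::real)\<^sup>2 + 1 \<noteq> 0"
  by (simp add: add_nonneg_eq_0_iff)

lemma P1_to_circle_in_circle: "P1_to_circle p \<in> sphere 0 1"
proof (cases p)
  case (Some t)
  have "((t\<^sup>2 - 1) / (t\<^sup>2 + 1))\<^sup>2 + (2 * t / (t\<^sup>2 + 1))\<^sup>2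
      = ((t\<^sup>2 - 1)\<^sup>2 + (2 * t)\<^sup>2) / (t\<^sup>2 + 1)\<^sup>2"
    by (simp add: power_divide add_divide_distrib)
  also have "(t\<^sup>2 - 1)\<^sup>2 + (2 * t)\<^sup>2 = (t\<^sup>2 + 1)\<^sup>2"
    by (simp add: power2_eq_square algebra_simps)
  finally have "((t\<^sup>2 - 1) / (t\<^sup>2 + 1))\<^sup>2 + (2 * t / (t\<^sup>2 + 1))\<^sup>2 = 1"
    by simp
  then show ?thesis
    by (simp add: Some P1_to_circle_Some cmod_eq_1_iff)
qed (simp add: P1_to_circle_None)

lemma P1_to_circle_Some_neq_1: "P1_to_circle (Some t) \<noteq> 1"
proof
  assume "P1_to_circle (Some t) = 1"
  then have "(t\<^sup>2 - 1) / (t\<^sup>2 + 1) = 1"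
    by (simp add: P1_to_circle_Some complex_eq_iff)
  then show False
    by simp
qed

lemma Re_lt_1_on_circle:
  assumes "z \<in> sphere 0 1" "z \<noteq> 1"
  shows "Re z < 1"
proof -
  have "Re z \<le> 1"
    using abs_Re_le_cmod[of z] assms(1) by simp
  moreover have "Re z \<noteq> 1"
  proof
    assume "Re z = 1"
    with assms(1) have "Im z = 0"
      by (simp add: cmod_eq_1_iff)
    with \<open>Re z = 1\<close> assms(2) show False
      by (simp add: complex_eq_iff)
  qed
  ultimately show ?thesis
    by simp
qed

definition circle_to_P1 :: "complex \<Rightarrow> P1" where
  "circle_to_P1 z = (if z = 1 then None else Some (Im z / (1 - Re z)))"

lemma circle_to_P1_inverse: "circle_to_P1 (P1_to_circle p) = p"
proof (cases p)
  case (Some t)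
  have "1 + t\<^sup>2 \<noteq> 0"
    by (metis add.commute square_plus_one_neq_zero)
  then have "2 * t / (t\<^sup>2 + 1) / (1 - (t\<^sup>2 - 1) / (t\<^sup>2 + 1)) = t"
    by (simp add: field_simps)
  then show ?thesis
    by (simp add: Some circle_to_P1_def P1_to_circle_Some_neq_1) (simp add: P1_to_circle_Some)
qed (simp add: circle_to_P1_def P1_to_circle_None)

lemma P1_to_circle_inverse:
  assumes "z \<in> sphere 0 1"
  shows "P1_to_circle (circle_to_P1 z) = z"
proof (cases "z = 1")
  case False
  define x y where "x = Re z" and "y = Im z"
  have circ: "y\<^sup>2 = (1 - x) * (1 + x)"
    using assms by (simp add: cmod_eq_1_iff x_def y_def algebra_simps power2_eq_square)
  have "1 - x > 0"
    using Re_lt_1_on_circle[OF assms False] by (simp add: x_def)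
  define t where "t = y / (1 - x)"
  have "t\<^sup>2 = y\<^sup>2 / (1 - x)\<^sup>2"
    by (simp add: t_def power_divide)
  also have "\<dots> = (1 + x) / (1 - x)"
    unfolding circ using \<open>1 - x > 0\<close> by (simp add: power2_eq_square)
  finally have t_sq: "t\<^sup>2 = (1 + x) / (1 - x)" .
  have t1: "t\<^sup>2 + 1 = 2 / (1 - x)" and t2: "t\<^sup>2 - 1 = 2 * x / (1 - x)"
    using \<open>1 - x > 0\<close> by (simp_all add: t_sq field_simps)
  have "(t\<^sup>2 - 1) / (t\<^sup>2 + 1) = x" "2 * t / (t\<^sup>2 + 1) = y"
    unfolding t1 t2 using \<open>1 - x > 0\<close> by (simp_all add: t_def)
  then show ?thesis
    using False by (simp add: circle_to_P1_def P1_to_circle_Some complex_eq_iff P1_to_circle_None x_def y_def t_def)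
qed (simp add: circle_to_P1_def P1_to_circle_None)

lemma continuous_map_P1I:
  assumes "continuous_on (sphere 0 1) (\<lambda>z. P1_to_circle (g (circle_to_P1 z)))"
  shows "continuous_map P1_top P1_top g"
proof -
  have "continuous_map P1_top (top_of_set (sphere 0 1)) ((\<lambda>z. P1_to_circle (g (circle_to_P1 z))) \<circ> P1_to_circle)"
    unfolding P1_top_def using assms P1_to_circle_in_circle
    by (intro continuous_map_pullback) (auto simp: continuous_map_in_subtopology)
  then have "continuous_map P1_top (top_of_set (sphere 0 1)) (P1_to_circle \<circ> g)"
    by (simp add: o_def circle_to_P1_inverse)
  then show ?thesis
    unfolding P1_top_def by (rule continuous_map_pullback') auto
qed

lemma continuous_on_map_option_circle:
  assumes "continuous_on UNIV g"
  shows "continuous_on (sphere 0 1 - {1}) (\<lambda>z. P1_to_circle (map_option g (circle_to_P1 z)))"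
proof -
  have "continuous_on UNIV (\<lambda>t. P1_to_circle (Some t))"
    unfolding P1_to_circle_Some by (intro continuous_intros) auto
  then have "continuous_on UNIV (\<lambda>t. P1_to_circle (Some (g t)))"
    by (rule continuous_on_compose2[OF _ assms]) auto
  moreover have "continuous_on (sphere 0 1 - {1}) (\<lambda>z. Im z / (1 - Re z))"
    by (intro continuous_intros) (use Re_lt_1_on_circle in force)
  ultimately have "continuous_on (sphere 0 1 - {1}) (\<lambda>z. P1_to_circle (Some (g (Im z / (1 - Re z)))))"
    by (rule continuous_on_compose2) auto
  then show ?thesis
    by (rule continuous_on_eq) (simp add: circle_to_P1_def)
qed

definition extend_by_id :: "real \<Rightarrow> real \<Rightarrow> (real \<Rightarrow> real) \<Rightarrow> P1 \<Rightarrow> P1" where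
  "extend_by_id p q \<phi> = map_option (\<lambda>t. if p \<le> t \<and> t \<le> q then \<phi> t else t)"

lemma continuous_on_glue_id:
  fixes \<phi> :: "real \<Rightarrow> real"
  assumes "p \<le> q" "continuous_on {p..q} \<phi>" "\<phi> p = p" "\<phi> q = q"
  shows "continuous_on UNIV (\<lambda>t. if p \<le> t \<and> t \<le> q then \<phi> t else t)"
proof -
  \<comment> \<open>Clamping to \<open>[p, q]\<close> writes the glued map as a single continuous expression.\<close>
  define c where "c t = max p (min q t)" for t
  have glue: "(\<lambda>t. if p \<le> t \<and> t \<le> q then \<phi> t else t) = (\<lambda>t. \<phi> (c t) + (t - c t))"
    using assms(1,3,4) by (auto simp: c_def fun_eq_iff)
  have "continuous_on UNIV c"
    unfolding c_def by (intro continuous_intros)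
  moreover have "continuous_on UNIV (\<lambda>t. \<phi> (c t))"
    using assms(1) unfolding c_def
    by (intro continuous_on_compose2[OF assms(2)] continuous_intros) auto
  ultimately have "continuous_on UNIV (\<lambda>t. \<phi> (c t) + (t - c t))"
    by (intro continuous_intros)
  then show ?thesis
    unfolding glue .
qed

lemma continuous_map_extend_by_id:
  assumes "p \<le> q" "continuous_on {p..q} \<phi>" "\<phi> p = p" "\<phi> q = q"
  shows "continuous_map P1_top P1_top (extend_by_id p q \<phi>)"
proof (rule continuous_map_P1I)
  let ?C = "sphere (0::complex) 1"
  let ?g = "\<lambda>z. P1_to_circle (extend_by_id p q \<phi> (circle_to_P1 z))"
  define K where "K = (\<lambda>t. P1_to_circle (Some t)) ` {p..q}"
  have "compact K"
    unfolding K_def P1_to_circle_Some by (intro compact_continuous_image continuous_intros) auto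
  then have "openin (top_of_set ?C) (?C \<inter> - K)"
    by (intro openin_open_Int open_Compl compact_imp_closed)
  then have open_T: "openin (top_of_set ?C) (?C - K)"
    by (simp add: Diff_eq)
  have "openin (top_of_set ?C) (?C \<inter> - {1})"
    by (intro openin_open_Int open_Compl) simp
  then have open_S: "openin (top_of_set ?C) (?C - {1})"
    by (simp add: Diff_eq)
  have "1 \<notin> K"
    unfolding K_def using P1_to_circle_Some_neq_1 by auto
  then have C: "?C = (?C - {1}) \<union> (?C - K)"
    by auto
  have "continuous_on (?C - {1}) ?g"
    unfolding extend_by_id_def by (rule continuous_on_map_option_circle[OF continuous_on_glue_id[OF assms]])
  moreover have id_off_K: "?g z = z" if "z \<in> ?C - K" for z
  proof (cases "z = 1")
    case False
    then obtain t where "circle_to_P1 z = Some t"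
      by (simp add: circle_to_P1_def)
    moreover have "t \<notin> {p..q}"
      using that P1_to_circle_inverse[of z] calculation unfolding K_def by force
    ultimately show ?thesis
      using that P1_to_circle_inverse[of z] by (auto simp: extend_by_id_def)
  qed (simp add: circle_to_P1_def extend_by_id_def P1_to_circle_None)
  moreover have "continuous_on (?C - K) ?g"
    by (rule continuous_on_eq[OF continuous_on_id]) (simp add: id_off_K)
  ultimately have "continuous_on ((?C - {1}) \<union> (?C - K)) ?g"
    using open_S open_T C by (intro continuous_on_Un_local_open) simp_all
  then show "continuous_on ?C ?g"
    using C by simp
qed

lemma topspace_P1_top [simp]: "topspace P1_top = UNIV"
  unfolding P1_top_def topspace_pullback_topology using P1_to_circle_in_circle by auto

lemma extend_by_id_inverse:
  assumes "\<And>t. t \<in> {p..q} \<Longrightarrow> \<phi> t \<in> {p..q} \<and> \<psi> (\<phi> t) = t"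
  shows "extend_by_id p q \<psi> (extend_by_id p q \<phi> x) = x"
  using assms by (cases x) (auto simp: extend_by_id_def)

lemma homeomorphic_map_extend_by_id:
  assumes "p \<le> q" "continuous_on {p..q} \<phi>" "continuous_on {p..q} \<psi>" "\<phi> p = p" "\<phi> q = q"
    and "\<And>t. t \<in> {p..q} \<Longrightarrow> \<phi> t \<in> {p..q} \<and> \<psi> (\<phi> t) = t"
    and "\<And>t. t \<in> {p..q} \<Longrightarrow> \<psi> t \<in> {p..q} \<and> \<phi> (\<psi> t) = t"
  shows "homeomorphic_map P1_top P1_top (extend_by_id p q \<phi>)"
proof -
  have "\<psi> p = p" "\<psi> q = q"
    using assms(6)[of p] assms(6)[of q] assms(1,4,5) by auto
  then show ?thesis
    unfolding homeomorphic_map_maps homeomorphic_maps_def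
    using assms extend_by_id_inverse[OF assms(6)] extend_by_id_inverse[OF assms(7)]
    by (intro exI[of _ "extend_by_id p q \<psi>"]) (simp add: continuous_map_extend_by_id)
qed

section \<open>Unit squares of a subring\<close>

text \<open>The scaling factors of the affine maps \<open>t \<mapsto> u (u t + v)\<close> induced by upper triangular
  matrices in \<open>SL2 A\<close>.\<close>

definition unit_squares :: "real set \<Rightarrow> real set" where
  "unit_squares A = {u\<^sup>2 | u. u \<in> A \<and> (\<exists>v\<in>A. u * v = 1)}"

lemma unit_squaresE:
  assumes "x \<in> unit_squares A"
  obtains u where "u \<in> A" "1 / u \<in> A" "u \<noteq> 0" "x = u\<^sup>2"
proof -
  obtain u v where "u \<in> A" "v \<in> A" "u * v = 1" "x = u\<^sup>2"
    using assms by (auto simp: unit_squares_def)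
  moreover have "u \<noteq> 0"
    using \<open>u * v = 1\<close> by auto
  moreover have "v = 1 / u"
    using \<open>u \<noteq> 0\<close> \<open>u * v = 1\<close> by (simp add: eq_divide_eq mult.commute)
  ultimately show thesis
    using that by auto
qed

lemma unit_squaresI: "u \<in> A \<Longrightarrow> 1 / u \<in> A \<Longrightarrow> u \<noteq> 0 \<Longrightarrow> u\<^sup>2 \<in> unit_squares A"
  unfolding unit_squares_def by (intro CollectI exI[of _ u]) force

lemma unit_squares_pos: "x \<in> unit_squares A \<Longrightarrow> 0 < x"
  by (erule unit_squaresE) simp

context
  fixes A assumes A: "subring_of_reals A"
begin

lemma subring_zero: "0 \<in> A" and subring_one: "1 \<in> A"
  using A by (simp_all add: subring_of_reals_def)

lemma subring_add: "x \<in> A \<Longrightarrow> y \<in> A \<Longrightarrow> x + y \<in> A"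
  and subring_diff: "x \<in> A \<Longrightarrow> y \<in> A \<Longrightarrow> x - y \<in> A"
  and subring_mult: "x \<in> A \<Longrightarrow> y \<in> A \<Longrightarrow> x * y \<in> A"
  using A by (simp_all add: subring_of_reals_def)

lemma add_subgroup_subring: "add_subgroup A"
  by (simp add: add_subgroup_def subring_zero subring_diff)

lemma unit_squares_subring: "x \<in> unit_squares A \<Longrightarrow> x \<in> A"
  by (erule unit_squaresE) (simp add: power2_eq_square subring_mult)

lemma unit_squares_inverse_subring: "x \<in> unit_squares A \<Longrightarrow> 1 / x \<in> A"
  by (erule unit_squaresE) (metis power2_eq_square power_one_over subring_mult)

lemma unit_squares_one: "1 \<in> unit_squares A"
  using unit_squaresI[of 1 A] subring_one by simp

lemma unit_squares_mult:
  assumes "x \<in> unit_squares A" "y \<in> unit_squares A"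
  shows "x * y \<in> unit_squares A"
proof -
  obtain u w where "u \<in> A" "1 / u \<in> A" "u \<noteq> 0" "x = u\<^sup>2" "w \<in> A" "1 / w \<in> A" "w \<noteq> 0" "y = w\<^sup>2"
    using assms by (elim unit_squaresE)
  moreover have "u * w \<in> A" "1 / (u * w) \<in> A"
    using subring_mult[OF \<open>u \<in> A\<close> \<open>w \<in> A\<close>] subring_mult[OF \<open>1 / u \<in> A\<close> \<open>1 / w \<in> A\<close>]
    by simp_all
  ultimately show ?thesis
    using unit_squaresI[of "u * w" A] by (simp add: power_mult_distrib)
qed

lemma unit_squares_inverse:
  assumes "x \<in> unit_squares A"
  shows "1 / x \<in> unit_squares A"
proof -
  obtain u where "u \<in> A" "1 / u \<in> A" "u \<noteq> 0" "x = u\<^sup>2"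
    using assms by (elim unit_squaresE)
  then show ?thesis
    using unit_squaresI[of "1 / u" A] by (simp add: power_one_over)
qed

lemma add_subgroup_ln_unit_squares: "add_subgroup (ln ` unit_squares A)"
  unfolding add_subgroup_def
proof (intro conjI ballI)
  show "0 \<in> ln ` unit_squares A"
    using unit_squares_one by force
  fix x y assume "x \<in> ln ` unit_squares A" "y \<in> ln ` unit_squares A"
  then obtain a b where ab: "a \<in> unit_squares A" "b \<in> unit_squares A" "x = ln a" "y = ln b"
    by blast
  moreover have "0 < a" "0 < b"
    using ab(1,2) by (simp_all add: unit_squares_pos)
  ultimately have "x - y = ln (a * (1 / b))"
    by (simp add: ln_div)
  then show "x - y \<in> ln ` unit_squares A"
    using unit_squares_mult[OF ab(1) unit_squares_inverse[OF ab(2)]] by blast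
qed

end

section \<open>Projective bumps\<close>

definition golden_lo :: real where "golden_lo = (1 - sqrt 5) / 2"
definition golden_hi :: real where "golden_hi = (1 + sqrt 5) / 2"

lemma sqrt_5_bounds: "2 < sqrt 5" "sqrt 5 < 3"
  by (simp_all add: real_less_rsqrt real_sqrt_less_iff[of 5 9, simplified])

lemma golden_lo: "golden_lo\<^sup>2 = golden_lo + 1" "-1 < golden_lo" "golden_lo < 0"
  and golden_hi: "golden_hi\<^sup>2 = golden_hi + 1" "0 < golden_hi" "golden_hi < 2"
  using sqrt_5_bounds by (auto simp: golden_lo_def golden_hi_def power2_eq_square field_simps)

text \<open>The projective action of the hyperbolic matrix \<open>(2, 1, 1, 1)\<close>, whose fixed points are
  \<open>golden_lo\<close> and \<open>golden_hi\<close>.\<close>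

definition golden :: "real \<Rightarrow> real" where "golden x = (2 * x + 1) / (x + 1)"
definition golden_inv :: "real \<Rightarrow> real" where "golden_inv x = (x - 1) / (2 - x)"

lemma golden_fixed: "x\<^sup>2 = x + 1 \<Longrightarrow> golden x = x"
  unfolding golden_def by (cases "x = -1") (auto simp: field_simps power2_eq_square)

lemma golden_mono: "-1 < x \<Longrightarrow> x \<le> y \<Longrightarrow> golden x \<le> golden y"
  unfolding golden_def by (simp add: field_simps)

lemma golden_inv_mono: "y < 2 \<Longrightarrow> x \<le> y \<Longrightarrow> golden_inv x \<le> golden_inv y"
  unfolding golden_inv_def by (simp add: field_simps)

lemma golden_golden_inv: "x < 2 \<Longrightarrow> golden (golden_inv x) = x"
  and golden_inv_golden: "-1 < x \<Longrightarrow> golden_inv (golden x) = x"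
  unfolding golden_def golden_inv_def by (simp_all add: field_simps)

lemma golden_bij:
  assumes "x \<in> {golden_lo..golden_hi}"
  shows "golden x \<in> {golden_lo..golden_hi} \<and> golden_inv (golden x) = x"
    and "golden_inv x \<in> {golden_lo..golden_hi} \<and> golden (golden_inv x) = x"
proof -
  have lo: "golden golden_lo = golden_lo"
    by (rule golden_fixed) (rule golden_lo(1))
  then have lo': "golden_inv golden_lo = golden_lo"
    using golden_inv_golden[OF golden_lo(2)] by simp
  have hi: "golden golden_hi = golden_hi"
    by (rule golden_fixed) (rule golden_hi(1))
  then have hi': "golden_inv golden_hi = golden_hi"
    using golden_inv_golden[of golden_hi] golden_hi(2) by simp
  show "golden x \<in> {golden_lo..golden_hi} \<and> golden_inv (golden x) = x"
    using assms golden_lo(2) golden_mono[of golden_lo x] golden_mono[of x golden_hi] lo hi golden_inv_golden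
    by auto
  show "golden_inv x \<in> {golden_lo..golden_hi} \<and> golden (golden_inv x) = x"
    using assms golden_hi(3) golden_inv_mono[of x golden_lo] golden_inv_mono[of golden_hi x] lo' hi' golden_golden_inv
    by auto
qed

lemma affine_interval_iff:
  fixes a b p q t :: real
  assumes "a > 0"
  shows "t \<in> {(p - b) / a..(q - b) / a} \<longleftrightarrow> a * t + b \<in> {p..q}"
proof -
  have "(p - b) / a \<le> t \<longleftrightarrow> p - b \<le> t * a"
    by (rule pos_divide_le_eq[OF assms])
  moreover have "t \<le> (q - b) / a \<longleftrightarrow> t * a \<le> q - b"
    by (rule pos_le_divide_eq[OF assms])
  ultimately have "(p - b) / a \<le> t \<longleftrightarrow> p \<le> a * t + b" "t \<le> (q - b) / a \<longleftrightarrow> a * t + b \<le> q"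
    by (simp_all add: algebra_simps)
  then show ?thesis
    by simp
qed

lemma homeomorphic_map_extend_by_id_affine:
  assumes a: "a > 0" and "p \<le> q" "continuous_on {p..q} \<phi>" "continuous_on {p..q} \<psi>" "\<phi> p = p" "\<phi> q = q"
    and \<phi>\<psi>: "\<And>t. t \<in> {p..q} \<Longrightarrow> \<phi> t \<in> {p..q} \<and> \<psi> (\<phi> t) = t"
    and \<psi>\<phi>: "\<And>t. t \<in> {p..q} \<Longrightarrow> \<psi> t \<in> {p..q} \<and> \<phi> (\<psi> t) = t"
  shows "homeomorphic_map P1_top P1_top
    (extend_by_id ((p - b) / a) ((q - b) / a) (\<lambda>t. (\<phi> (a * t + b) - b) / a))"
proof (rule homeomorphic_map_extend_by_id[where \<psi> = "\<lambda>t. (\<psi> (a * t + b) - b) / a"])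
  have maps: "(\<lambda>t. a * t + b) ` {(p - b) / a..(q - b) / a} \<subseteq> {p..q}"
    using affine_interval_iff[OF a] by auto
  have affine: "continuous_on {(p - b) / a..(q - b) / a} (\<lambda>t. a * t + b)"
    by (intro continuous_intros)
  have "continuous_on {(p - b) / a..(q - b) / a} (\<lambda>t. \<phi> (a * t + b))"
    "continuous_on {(p - b) / a..(q - b) / a} (\<lambda>t. \<psi> (a * t + b))"
    using continuous_on_compose2[OF assms(3) affine maps] continuous_on_compose2[OF assms(4) affine maps]
    by simp_all
  then show "continuous_on {(p - b) / a..(q - b) / a} (\<lambda>t. (\<phi> (a * t + b) - b) / a)"
    "continuous_on {(p - b) / a..(q - b) / a} (\<lambda>t. (\<psi> (a * t + b) - b) / a)"
    using a by (auto intro!: continuous_intros)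
next
  show "(p - b) / a \<le> (q - b) / a"
    using a \<open>p \<le> q\<close> by (simp add: divide_right_mono)
  show "(\<phi> (a * ((p - b) / a) + b) - b) / a = (p - b) / a"
    "(\<phi> (a * ((q - b) / a) + b) - b) / a = (q - b) / a"
    using a assms(5,6) by simp_all
next
  fix t assume "t \<in> {(p - b) / a..(q - b) / a}"
  then have t: "a * t + b \<in> {p..q}"
    using affine_interval_iff[OF a] by blast
  show "(\<phi> (a * t + b) - b) / a \<in> {(p - b) / a..(q - b) / a} \<and>
      (\<psi> (a * ((\<phi> (a * t + b) - b) / a) + b) - b) / a = t"
    using \<phi>\<psi>[OF t] a affine_interval_iff[OF a, of "(\<phi> (a * t + b) - b) / a"] by simp
  show "(\<psi> (a * t + b) - b) / a \<in> {(p - b) / a..(q - b) / a} \<and>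
      (\<phi> (a * ((\<psi> (a * t + b) - b) / a) + b) - b) / a = t"
    using \<psi>\<phi>[OF t] a affine_interval_iff[OF a, of "(\<psi> (a * t + b) - b) / a"] by simp
qed

definition bump :: "real \<Rightarrow> real \<Rightarrow> P1 \<Rightarrow> P1" where
  "bump a b = extend_by_id ((golden_lo - b) / a) ((golden_hi - b) / a) (\<lambda>t. (golden (a * t + b) - b) / a)"

lemma homeomorphic_map_bump:
  assumes "a > 0"
  shows "homeomorphic_map P1_top P1_top (bump a b)"
  unfolding bump_def
proof (rule homeomorphic_map_extend_by_id_affine[OF assms])
  show "continuous_on {golden_lo..golden_hi} golden"
    unfolding golden_def using golden_lo(2) by (intro continuous_intros) auto
  show "continuous_on {golden_lo..golden_hi} golden_inv"
    unfolding golden_inv_def using golden_hi(3) by (intro continuous_intros) auto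
  show "golden golden_lo = golden_lo" "golden golden_hi = golden_hi"
    by (simp_all add: golden_fixed golden_lo(1) golden_hi(1))
qed (use golden_lo golden_hi golden_bij in auto)

definition golden_matrix :: "real \<Rightarrow> real \<Rightarrow> mat2" where
  "golden_matrix a b = (2 - b, (1 + b - b\<^sup>2) / a, a, b + 1)"

lemma mob_golden_matrix:
  assumes "a > 0" "a * t + b + 1 \<noteq> 0"
  shows "mob (golden_matrix a b) (Some t) = Some ((golden (a * t + b) - b) / a)"
proof -
  have "a * t + (b + 1) \<noteq> 0"
    using assms(2) by (simp add: add.assoc)
  moreover have "((2 - b) * t + (1 + b - b\<^sup>2) / a) / (a * t + (b + 1)) = (golden (a * t + b) - b) / a"
    using assms calculation by (simp add: golden_def field_simps power2_eq_square)
  ultimately show ?thesis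
    by (simp add: mob_def golden_matrix_def)
qed

lemma hyperbolic_golden_matrix: "hyperbolic (golden_matrix a b)"
  by (simp add: hyperbolic_def golden_matrix_def)

lemma golden_matrix_SL2:
  assumes A: "subring_of_reals A" and "a \<in> unit_squares A" "b \<in> A"
  shows "golden_matrix a b \<in> SL2 A"
proof -
  have "a > 0"
    using assms(2) by (rule unit_squares_pos)
  have "(1 + b - b\<^sup>2) * (1 / a) \<in> A"
    using assms unit_squares_inverse_subring[OF A]
    by (intro subring_mult[OF A] subring_diff[OF A] subring_add[OF A] subring_one[OF A])
      (simp_all add: power2_eq_square subring_mult[OF A])
  moreover have "2 - b \<in> A" "b + 1 \<in> A"
    using assms subring_add[OF A] subring_diff[OF A] subring_one[OF A]
    by (metis one_add_one, simp)
  moreover have "(1 + b - b\<^sup>2) / a * a = 1 + b - b\<^sup>2"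
    using \<open>a > 0\<close> by simp
  then have "(2 - b) * (b + 1) - (1 + b - b\<^sup>2) / a * a = 1"
    by (simp add: power2_eq_square algebra_simps)
  ultimately show ?thesis
    using unit_squares_subring[OF A assms(2)] by (simp add: SL2_def golden_matrix_def)
qed

lemma bump_endpoints_P_A:
  assumes A: "subring_of_reals A" and a: "a \<in> unit_squares A" and b: "b \<in> A"
    and x: "x = golden_lo \<or> x = golden_hi"
  shows "Some ((x - b) / a) \<in> P_A A"
proof -
  have "a > 0"
    using a by (rule unit_squares_pos)
  moreover have "x\<^sup>2 = x + 1" "x + 1 \<noteq> 0"
    using x golden_lo golden_hi by auto
  ultimately have "mob (golden_matrix a b) (Some ((x - b) / a)) = Some ((x - b) / a)"
    by (simp add: mob_golden_matrix golden_fixed)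
  then show ?thesis
    unfolding P_A_def using golden_matrix_SL2[OF assms(1-3)] hyperbolic_golden_matrix by blast
qed

lemma identity_matrix_SL2: "subring_of_reals A \<Longrightarrow> (1, 0, 0, 1) \<in> SL2 A"
  by (simp add: SL2_def subring_zero subring_one)

lemma mob_identity_matrix: "mob (1, 0, 0, 1) p = p"
  by (cases p) (simp_all add: mob_def)

lemma bump_in_G_A:
  assumes A: "subring_of_reals A" and a: "a \<in> unit_squares A" and b: "b \<in> A"
  shows "bump a b \<in> G_A A"
proof -
  have "a > 0"
    using a by (rule unit_squares_pos)
  define l h where "l = (golden_lo - b) / a" and "h = (golden_hi - b) / a"
  have "l < h"
    using \<open>a > 0\<close> golden_lo golden_hi by (simp add: l_def h_def divide_strict_right_mono)
  define ps where "ps = [(Some l, Some h, golden_matrix a b), (Some h, Some l, (1, 0, 0, 1))]"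
  have inner: "cint (Some l) (Some h) = Some ` {l..h}" and outer: "cint (Some h) (Some l) = Some ` {h..} \<union> {None} \<union> Some ` {..l}"
    using \<open>l < h\<close> by (simp_all add: cint_def)
  have cover: "(\<Union>(x, y, M)\<in>set ps. cint x y) = UNIV"
  proof -
    have "p \<in> cint (Some l) (Some h) \<union> cint (Some h) (Some l)" for p
      unfolding inner outer by (cases p) (auto simp: image_iff)
    then show ?thesis
      by (auto simp: ps_def)
  qed
  have on_inner: "bump a b p = mob (golden_matrix a b) p" if p: "p \<in> cint (Some l) (Some h)" for p
  proof -
    obtain t where t: "p = Some t" "l \<le> t" "t \<le> h"
      using p inner by auto
    then have "golden_lo \<le> a * t + b"
      using affine_interval_iff[OF \<open>a > 0\<close>] by (auto simp: l_def h_def)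
    then have "a * t + b + 1 \<noteq> 0"
      using golden_lo(2) by linarith
    then show ?thesis
      using t mob_golden_matrix[OF \<open>a > 0\<close>] by (simp add: bump_def extend_by_id_def l_def h_def)
  qed
  have on_outer: "bump a b p = mob (1, 0, 0, 1) p" if "p \<in> cint (Some h) (Some l)" for p
    using that \<open>l < h\<close> unfolding outer mob_identity_matrix
    by (auto simp: bump_def extend_by_id_def l_def h_def golden_fixed golden_lo golden_hi)
  have "Some l \<in> P_A A" "Some h \<in> P_A A"
    using bump_endpoints_P_A[OF assms] by (auto simp: l_def h_def)
  then have "\<forall>(x, y, M)\<in>set ps. x \<in> P_A A \<and> y \<in> P_A A \<and> M \<in> SL2 A \<and> (\<forall>p\<in>cint x y. bump a b p = mob M p)"
    using golden_matrix_SL2[OF assms] identity_matrix_SL2[OF A] on_inner on_outer by (auto simp: ps_def)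
  with cover show ?thesis
    unfolding G_A_def using homeomorphic_map_bump[OF \<open>a > 0\<close>] by blast
qed

lemma bump_neq_id:
  assumes "a > 0"
  shows "bump a b \<noteq> id"
proof
  assume "bump a b = id"
  have "a * (- b / a) + b = 0"
    using assms by simp
  then have "- b / a \<in> {(golden_lo - b) / a..(golden_hi - b) / a}"
    using affine_interval_iff[OF assms] golden_lo golden_hi by simp
  then have "bump a b (Some (- b / a)) = Some ((golden 0 - b) / a)"
    using \<open>a * (- b / a) + b = 0\<close>
    by (simp only: bump_def extend_by_id_def option.map atLeastAtMost_iff simp_thms if_True)
  with \<open>bump a b = id\<close> have "(golden 0 - b) / a = - b / a"
    by simp
  then show False
    using assms by (simp add: golden_def divide_simps)
qed

lemma bump_in_H_A:
  assumes "subring_of_reals A" "a \<in> unit_squares A" "b \<in> A"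
  shows "bump a b \<in> H_A A - {id}"
  using bump_in_G_A[OF assms] bump_neq_id[OF unit_squares_pos[OF assms(2)]]
  by (simp add: H_A_def bump_def extend_by_id_def)

section \<open>Conjugation by elements of \<open>H(A)\<close>\<close>

lemma conj_extend_by_id:
  assumes h: "bij h" and germ: "\<forall>t\<ge>R. h (Some t) = Some (a * t + b)" and a: "a > 0"
    and support: "a * R + b \<le> p" and maps: "\<And>t. t \<in> {p..q} \<Longrightarrow> \<phi> t \<in> {p..q}"
  shows "inv h \<circ> extend_by_id p q \<phi> \<circ> h
    = extend_by_id ((p - b) / a) ((q - b) / a) (\<lambda>t. (\<phi> (a * t + b) - b) / a)"
proof
  fix x
  have inv_h: "inv h (h y) = y" for y
    using h by (simp add: bij_is_inj)
  have preimage: "h (Some ((s - b) / a)) = Some s" if "p \<le> s" for s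
  proof -
    have "R \<le> (s - b) / a"
      using that support a by (simp add: pos_le_divide_eq algebra_simps)
    then show ?thesis
      using germ a by simp
  qed
  show "(inv h \<circ> extend_by_id p q \<phi> \<circ> h) x
      = extend_by_id ((p - b) / a) ((q - b) / a) (\<lambda>t. (\<phi> (a * t + b) - b) / a) x"
  proof (cases "\<exists>t. x = Some t \<and> a * t + b \<in> {p..q}")
    case True
    then obtain t where t: "x = Some t" "a * t + b \<in> {p..q}"
      by blast
    then have "h x = Some (a * t + b)"
      using preimage[of "a * t + b"] a by simp
    moreover have "extend_by_id p q \<phi> (Some (a * t + b)) = h (Some ((\<phi> (a * t + b) - b) / a))"
      using t(2) maps[OF t(2)] preimage by (simp add: extend_by_id_def)
    ultimately show ?thesis
      using t affine_interval_iff[OF a] by (simp add: inv_h extend_by_id_def)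
  next
    case False
    have "extend_by_id p q \<phi> (h x) = h x"
    proof (cases "h x")
      case (Some s)
      show ?thesis
      proof (cases "s \<in> {p..q}")
        case True
        then have "h x = h (Some ((s - b) / a))"
          using Some preimage by simp
        then have "x = Some ((s - b) / a)"
          by (metis inv_h)
        with False True a show ?thesis
          by simp
      qed (auto simp: Some extend_by_id_def)
    qed (simp add: extend_by_id_def)
    moreover have "extend_by_id ((p - b) / a) ((q - b) / a) (\<lambda>t. (\<phi> (a * t + b) - b) / a) x = x"
      using False affine_interval_iff[OF a] by (cases x) (auto simp: extend_by_id_def)
    ultimately show ?thesis
      by (simp add: inv_h)
  qed
qed

lemma conj_bump:
  assumes h: "bij h" and germ: "\<forall>t\<ge>R. h (Some t) = Some (a' * t + b')" and "a' > 0" "a > 0"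
    and support: "a' * R + b' \<le> (golden_lo - b) / a"
  shows "inv h \<circ> bump a b \<circ> h = bump (a * a') (b + a * b')"
proof -
  have maps: "(golden (a * t + b) - b) / a \<in> {(golden_lo - b) / a..(golden_hi - b) / a}"
    if "t \<in> {(golden_lo - b) / a..(golden_hi - b) / a}" for t
    using that \<open>a > 0\<close> golden_bij(1)[of "a * t + b"] affine_interval_iff[OF \<open>a > 0\<close>] by simp
  have "inv h \<circ> bump a b \<circ> h = extend_by_id (((golden_lo - b) / a - b') / a') (((golden_hi - b) / a - b') / a')
      (\<lambda>t. ((golden (a * (a' * t + b') + b) - b) / a - b') / a')"
    unfolding bump_def by (rule conj_extend_by_id[OF h germ \<open>a' > 0\<close> support maps])
  also have "\<dots> = bump (a * a') (b + a * b')"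
  proof -
    have "((x - b) / a - b') / a' = (x - (b + a * b')) / (a * a')" for x
      using assms(3,4) by (simp add: field_simps)
    moreover have "a * (a' * t + b') + b = a * a' * t + (b + a * b')" for t
      by (simp add: algebra_simps)
    ultimately show ?thesis
      unfolding bump_def by (simp only:)
  qed
  finally show ?thesis .
qed

lemma cint_bounded_or_ray:
  "bdd_above {t. Some t \<in> cint x y} \<or> (None \<in> cint x y \<and> (\<exists>a. \<forall>t\<ge>a. Some t \<in> cint x y))"
proof (cases x; cases y)
  fix a b assume "x = Some a" "y = Some b"
  then show ?thesis
    by (cases "a \<le> b") (auto simp: cint_def bdd_above_def)
qed (auto simp: cint_def bdd_above_def)

lemma cint_cover_has_ray:
  assumes "(\<Union>(x, y, M)\<in>set ps. cint x y) = UNIV"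
  shows "\<exists>(x, y, M)\<in>set ps. None \<in> cint x y \<and> (\<exists>R. \<forall>t\<ge>R. Some t \<in> cint x y)"
proof (rule ccontr)
  assume no_ray: "\<not> ?thesis"
  have "bdd_above {t. Some t \<in> cint x y}" if "(x, y, M) \<in> set ps" for x y M
    using no_ray that cint_bounded_or_ray[of x y] by fastforce
  then have "bdd_above (\<Union>(x, y, M)\<in>set ps. {t. Some t \<in> cint x y})"
    by (subst bdd_above_UN) auto
  moreover have "(\<Union>(x, y, M)\<in>set ps. {t. Some t \<in> cint x y}) = UNIV"
    using assms by blast
  ultimately obtain B where "\<forall>t::real. t \<le> B"
    by (auto simp: bdd_above_def)
  then show False
    by (metis add_le_same_cancel1 not_one_le_zero)
qed

lemma H_A_affine_at_infinity:
  assumes A: "subring_of_reals A" and h: "h \<in> H_A A"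
  obtains R a b where "a \<in> unit_squares A" "b \<in> A" "\<forall>t\<ge>R. h (Some t) = Some (a * t + b)"
proof -
  have "h \<in> G_A A" and "h None = None"
    using h by (simp_all add: H_A_def)
  then obtain ps :: "(P1 \<times> P1 \<times> mat2) list" where cover: "(\<Union>(x, y, M)\<in>set ps. cint x y) = UNIV"
    and pieces: "\<forall>(x, y, M)\<in>set ps. x \<in> P_A A \<and> y \<in> P_A A \<and> M \<in> SL2 A \<and> (\<forall>p\<in>cint x y. h p = mob M p)"
    unfolding G_A_def by blast
  obtain x y m1 m2 m3 m4 R where piece: "(x, y, (m1, m2, m3, m4)) \<in> set ps" "None \<in> cint x y"
    "\<forall>t\<ge>R. Some t \<in> cint x y"
    using cint_cover_has_ray[OF cover] by auto
  then have M: "m1 \<in> A" "m2 \<in> A" "m4 \<in> A" "m1 * m4 - m2 * m3 = 1"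
    and hM: "\<forall>p\<in>cint x y. h p = mob (m1, m2, m3, m4) p"
    using pieces by (auto simp: SL2_def)
  with \<open>h None = None\<close> have "m3 = 0"
    using hM piece(2) by (auto simp: mob_def split: if_splits)
  then have "m1 * m4 = 1"
    using M(4) by simp
  then have "m1 \<noteq> 0" "m4 = 1 / m1"
    by (auto simp: eq_divide_eq mult.commute)
  show thesis
  proof
    show "m1\<^sup>2 \<in> unit_squares A"
      using M(1,3) \<open>m1 \<noteq> 0\<close> \<open>m4 = 1 / m1\<close> by (intro unit_squaresI) simp_all
    show "m1 * m2 \<in> A"
      using M(1,2) by (rule subring_mult[OF A])
    show "\<forall>t\<ge>R. h (Some t) = Some (m1\<^sup>2 * t + m1 * m2)"
      using hM piece(3) \<open>m3 = 0\<close> \<open>m1 \<noteq> 0\<close> \<open>m4 = 1 / m1\<close>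
      by (auto simp: mob_def field_simps power2_eq_square)
  qed
qed

lemma H_A_bij: "h \<in> H_A A \<Longrightarrow> bij h"
  unfolding H_A_def G_A_def bij_def
  using homeomorphic_imp_injective_map[of P1_top P1_top h] homeomorphic_imp_surjective_map[of P1_top P1_top h]
  by simp

section \<open>Inner amenability\<close>

locale bump_averaging =
  fixes A :: "real set" and \<mu> \<nu> :: "(real \<Rightarrow> real) \<Rightarrow> real"
  assumes subring: "subring_of_reals A"
    and \<mu>_mean: "is_mean A \<mu>"
    and \<mu>_shift: "\<And>f t. bdd_on A f \<Longrightarrow> t \<in> A \<Longrightarrow> \<mu> (\<lambda>x. f (x + t)) = \<mu> f"
    and \<mu>_below: "\<And>f g R. \<forall>x\<in>A. x \<le> R \<longrightarrow> f x = g x \<Longrightarrow> \<mu> f = \<mu> g"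
    and \<nu>_mean: "is_mean (ln ` unit_squares A) \<nu>"
    and \<nu>_shift: "\<And>f t. bdd_on (ln ` unit_squares A) f \<Longrightarrow> t \<in> ln ` unit_squares A \<Longrightarrow> \<nu> (\<lambda>x. f (x + t)) = \<nu> f"
begin

definition bump_avg :: "((P1 \<Rightarrow> P1) \<Rightarrow> real) \<Rightarrow> real \<Rightarrow> real" where
  "bump_avg F l = \<mu> (\<lambda>b. F (bump (exp l) b))"

lemma exp_ln_unit_squares: "l \<in> ln ` unit_squares A \<Longrightarrow> exp l \<in> unit_squares A"
  using unit_squares_pos by auto

lemma is_mean_bump_avg: "is_mean (H_A A - {id}) (\<lambda>F. \<nu> (bump_avg F))"
  unfolding bump_avg_def using \<nu>_mean \<mu>_mean
  by (rule is_mean_iterate) (use bump_in_H_A[OF subring] exp_ln_unit_squares in blast)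

lemma bump_avg_conj:
  assumes h: "h \<in> H_A A" and germ: "\<forall>t\<ge>R. h (Some t) = Some (a' * t + b')" "a' \<in> unit_squares A" "b' \<in> A"
    and a: "a \<in> unit_squares A" and F: "bdd_on (H_A A - {id}) F"
  shows "\<mu> (\<lambda>b. F (inv h \<circ> bump a b \<circ> h)) = \<mu> (\<lambda>b. F (bump (a * a') b))"
proof -
  have "a > 0" "a' > 0"
    using a germ(2) by (simp_all add: unit_squares_pos)
  \<comment> \<open>For \<open>b\<close> far to the left the support of \<open>bump a b\<close> lies where \<open>h\<close> is affine.\<close>
  have "\<mu> (\<lambda>b. F (inv h \<circ> bump a b \<circ> h)) = \<mu> (\<lambda>b. F (bump (a * a') (b + a * b')))"
  proof (rule \<mu>_below[of "golden_lo - a * (a' * R + b')"], intro ballI impI)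
    fix b assume "b \<le> golden_lo - a * (a' * R + b')"
    then have "a' * R + b' \<le> (golden_lo - b) / a"
      using \<open>a > 0\<close> by (simp add: pos_le_divide_eq mult.commute)
    then show "F (inv h \<circ> bump a b \<circ> h) = F (bump (a * a') (b + a * b'))"
      using conj_bump[OF H_A_bij[OF h] germ(1) \<open>a' > 0\<close> \<open>a > 0\<close>] by simp
  qed
  also have "\<dots> = \<mu> (\<lambda>b. F (bump (a * a') b))"
  proof (rule \<mu>_shift)
    show "bdd_on A (\<lambda>b. F (bump (a * a') b))"
      using F bump_in_H_A[OF subring unit_squares_mult[OF subring a germ(2)]] by (auto simp: bdd_on_def)
    show "a * b' \<in> A"
      using unit_squares_subring[OF subring a] germ(3) by (rule subring_mult[OF subring])
  qed
  finally show ?thesis .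
qed

lemma bump_avg_conj_invariant:
  assumes h: "h \<in> H_A A" and F: "bdd_on (H_A A - {id}) F"
  shows "\<nu> (bump_avg (\<lambda>x. F (inv h \<circ> x \<circ> h))) = \<nu> (bump_avg F)"
proof -
  let ?L = "ln ` unit_squares A"
  obtain R a' b' where germ: "a' \<in> unit_squares A" "b' \<in> A" "\<forall>t\<ge>R. h (Some t) = Some (a' * t + b')"
    using H_A_affine_at_infinity[OF subring h] by blast
  have "ln a' \<in> ?L"
    using germ(1) by blast
  obtain B where "\<forall>x\<in>H_A A - {id}. \<bar>F x\<bar> \<le> B"
    using F unfolding bdd_on_def by blast
  then have bound: "\<forall>l\<in>?L. \<bar>bump_avg F l\<bar> \<le> B"
    unfolding bump_avg_def using bump_in_H_A[OF subring] exp_ln_unit_squares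
    by (auto intro!: is_mean_bound[OF \<mu>_mean])
  then have "bdd_on ?L (\<lambda>l. bump_avg F (l + ln a'))"
    using add_subgroup_add[OF add_subgroup_ln_unit_squares[OF subring] _ \<open>ln a' \<in> ?L\<close>]
    by (intro bdd_onI[of _ _ B]) blast
  moreover have "\<forall>l\<in>?L. bump_avg F (l + ln a') = bump_avg (\<lambda>x. F (inv h \<circ> x \<circ> h)) l"
    using bump_avg_conj[OF h germ(3,1,2) exp_ln_unit_squares F] germ(1) unit_squares_pos
    by (simp add: bump_avg_def exp_add)
  ultimately have "\<nu> (\<lambda>l. bump_avg F (l + ln a')) = \<nu> (bump_avg (\<lambda>x. F (inv h \<circ> x \<circ> h)))"
    by (rule is_mean_cong[OF \<nu>_mean])
  moreover have "\<nu> (\<lambda>l. bump_avg F (l + ln a')) = \<nu> (bump_avg F)"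
    using bound by (intro \<nu>_shift[OF _ \<open>ln a' \<in> ?L\<close>] bdd_onI)
  ultimately show ?thesis
    by simp
qed

end

theorem proposition2:
  fixes A :: "real set"
  assumes "subring_of_reals A"
  shows "inner_amenable (H_A A)"
proof -
  have "A \<noteq> {0}"
    using subring_one[OF assms] by auto
  obtain \<mu> where "is_mean A \<mu>"
    and "\<And>f t. bdd_on A f \<Longrightarrow> t \<in> A \<Longrightarrow> \<mu> (\<lambda>x. f (x + t)) = \<mu> f"
    and "\<And>f g R. \<forall>x\<in>A. x \<le> R \<longrightarrow> f x = g x \<Longrightarrow> \<mu> f = \<mu> g"
    using ex_invariant_mean[OF add_subgroup_subring[OF assms]] \<open>A \<noteq> {0}\<close> by metis
  moreover obtain \<nu> where "is_mean (ln ` unit_squares A) \<nu>"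
    and "\<And>f t. bdd_on (ln ` unit_squares A) f \<Longrightarrow> t \<in> ln ` unit_squares A \<Longrightarrow> \<nu> (\<lambda>x. f (x + t)) = \<nu> f"
    using ex_invariant_mean[OF add_subgroup_ln_unit_squares[OF assms]] by metis
  ultimately interpret bump_averaging A \<mu> \<nu>
    using assms by unfold_locales
  show ?thesis
    unfolding inner_amenable_def using is_mean_bump_avg bump_avg_conj_invariant by blast
qed

end
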